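(* Let $\eta\in(0,1)$. Let $\mathbf{w}_0$ be such that $\xi_{01}\neq0$, and suppose that for each $t\ge0$ the vector $\mathbf{w}_{t+1}$ approximately minimizes $f_{t+1}$ so accurately that $\epsilon_t:=\frac{f_{t+1}(\mathbf{w}_{t+1})-f_{t+1}^*}{\mathbf{w}_t^\top\widehat{\mathbf{B}}\mathbf{w}_t}\le\min\Big(\sum_{i=2}^d\xi_{ti}^2/\beta_i,\ \xi_{t1}^2/\beta_1\Big)\cdot\frac{(\beta_1-\beta_2)^2}{32}.$ Let $T=\lceil\log_{7/5}(G(\mathbf{r}_0)/\eta)\rceil$. Then $|\sin\theta_t|\le G(\mathbf{r}_t)\le\eta$ for all $t\ge T$.
   Context: Given samples $(\mathbf{x}_i,\mathbf{y}_i)_{i=1}^N$ in $\mathbb{R}^{d_x}\times\mathbb{R}^{d_y}$, $d=d_x+d_y$, let $\widehat{\Sigma}_{xx}=\frac1N\sum\mathbf{x}_i\mathbf{x}_i^\top$, $\widehat{\Sigma}_{yy}=\frac1N\sum\mathbf{y}_i\mathbf{y}_i^\top$ (assumed positive definite), $\widehat{\Sigma}_{xy}=\frac1N\sum\mathbf{x}_i\mathbf{y}_i^\top$, $\widehat{\mathbf{T}}=\widehat{\Sigma}_{xx}^{-1/2}\widehat{\Sigma}_{xy}\widehat{\Sigma}_{yy}^{-1/2}$ with singular values $\widehat\rho_1\ge\widehat\rho_2\ge\cdots$ and gap $\widehat\Delta=\widehat\rho_1-\widehat\rho_2>0$, top unit singular pair $(\widehat{\mathbf{a}}_1,\widehat{\mathbf{b}}_1)$,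 $\widehat{\mathbf{u}}=\widehat{\Sigma}_{xx}^{-1/2}\widehat{\mathbf{a}}_1$, $\widehat{\mathbf{v}}=\widehat{\Sigma}_{yy}^{-1/2}\widehat{\mathbf{b}}_1$. Let $\lambda$ satisfy $\lambda-\widehat\rho_1\in[l\widehat\Delta,u\widehat\Delta]$ with $0<l<u<1$. Define $\widehat{\mathbf{C}}=\begin{bmatrix}\mathbf{0}&\widehat{\mathbf{T}}\\ \widehat{\mathbf{T}}^\top&\mathbf{0}\end{bmatrix}$, $\widehat{\mathbf{M}}_\lambda=(\lambda\mathbf{I}-\widehat{\mathbf{C}})^{-1}$, $\widehat{\mathbf{A}}_\lambda=\begin{bmatrix}\lambda\widehat{\Sigma}_{xx}&-\widehat{\Sigma}_{xy}\\-\widehat{\Sigma}_{xy}^\top&\lambda\widehat{\Sigma}_{yy}\end{bmatrix}$, $\widehat{\mathbf{B}}=\mathrm{diag}(\widehat{\Sigma}_{xx},\widehat{\Sigma}_{yy})$, so that $\widehat{\mathbf{M}}_\lambda=\widehat{\mathbf{B}}^{1/2}\widehat{\mathbf{A}}_\lambda^{-1}\widehat{\mathbf{B}}^{1/2}$. Let $\beta_1\ge\beta_2\ge\cdots\ge\beta_d>0$ be the eigenvalues of $\widehat{\mathbf{M}}_\lambda$ with orthonormal eigenvectors $\mathbf{p}_1,\dots,\mathbf{p}_d$, where $\mathbf{p}_1=\widehat{\mathbf{r}}:=\frac1{\sqrt2}[\widehat{\Sigma}_{xx}^{1/2}\widehat{\mathbf{u}};\widehat{\Sigma}_{yy}^{1/2}\widehat{\mathbf{v}}]$.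 For iterates $\mathbf{w}_t\in\mathbb{R}^d$ set $\mathbf{r}_t=\widehat{\mathbf{B}}^{1/2}\mathbf{w}_t$, $\xi_{ti}=\mathbf{r}_t^\top\mathbf{p}_i/\|\mathbf{r}_t\|$, $\theta_t$ the angle between $\mathbf{r}_t$ and $\widehat{\mathbf{r}}$, and $G(\mathbf{r}_t)=\sqrt{\sum_{i=2}^d\xi_{ti}^2/\beta_i}\big/\sqrt{\xi_{t1}^2/\beta_1}$. The least squares objective is $f_{t+1}(\mathbf{w})=\frac12\mathbf{w}^\top\widehat{\mathbf{A}}_\lambda\mathbf{w}-\mathbf{w}^\top\widehat{\mathbf{B}}\mathbf{w}_t$, with minimizer $\widehat{\mathbf{A}}_\lambda^{-1}\widehat{\mathbf{B}}\mathbf{w}_t$ and minimum value $f_{t+1}^*$. *)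

theory Defs
  imports "HOL-Analysis.Analysis"
begin

definition outer :: "real^'m \<Rightarrow> real^'n \<Rightarrow> real^'n^'m" where
  "outer u v = (\<chi> i j. u$i * v$j)"

definition psd_mat :: "real^'n^'n \<Rightarrow> bool" where
  "psd_mat A \<longleftrightarrow> transpose A = A \<and> (\<forall>v. 0 \<le> v \<bullet> (A *v v))"

definition pd_mat :: "real^'n^'n \<Rightarrow> bool" where
  "pd_mat A \<longleftrightarrow> transpose A = A \<and> (\<forall>v. v \<noteq> 0 \<longrightarrow> 0 < v \<bullet> (A *v v))"

definition msqrt :: "real^'n^'n \<Rightarrow> real^'n^'n" where
  "msqrt A = (THE S. psd_mat S \<and> S ** S = A)"

definition minvsqrt :: "real^'n^'n \<Rightarrow> real^'n^'n" where
  "minvsqrt A = matrix_inv (msqrt A)"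

definition emp_cov :: "nat \<Rightarrow> (nat \<Rightarrow> real^'m) \<Rightarrow> (nat \<Rightarrow> real^'n) \<Rightarrow> real^'n^'m" where
  "emp_cov N x y = (1 / real N) *\<^sub>R (\<Sum>i<N. outer (x i) (y i))"

definition blk :: "real^'x^'x \<Rightarrow> real^'y^'x \<Rightarrow> real^'x^'y \<Rightarrow> real^'y^'y \<Rightarrow> real^('x+'y)^('x+'y)" where
  "blk P Q R S = (\<chi> i j. case i of
      Inl a \<Rightarrow> (case j of Inl c \<Rightarrow> P$a$c | Inr c \<Rightarrow> Q$a$c)
    | Inr a \<Rightarrow> (case j of Inl c \<Rightarrow> R$a$c | Inr c \<Rightarrow> S$a$c))"

definition vcat :: "real^'x \<Rightarrow> real^'y \<Rightarrow> real^('x+'y)" where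
  "vcat u v = (\<chi> i. case i of Inl a \<Rightarrow> u$a | Inr c \<Rightarrow> v$c)"

definition vangle :: "'a::real_inner \<Rightarrow> 'a \<Rightarrow> real" where
  "vangle u v = arccos ((u \<bullet> v) / (norm u * norm v))"

end

theory Submission
  imports Defs
begin

text \<open>In whitened coordinates \<open>r = B^(1/2) w\<close> the exact least squares step is one step of power
  iteration with \<open>M = (\<lambda>I - C)\<inverse>\<close>, and the suboptimality \<open>f(w(t+1)) - f*\<close> is half the
  \<open>(\<lambda>I - C)\<close>-norm of the deviation of \<open>r(t+1)\<close> from \<open>M r(t)\<close>. Since \<open>\<lambda> - \<rho>1\<close> is smaller than
  the gap \<open>\<rho>1 - \<rho>2\<close>, the top eigenvalue of \<open>M\<close> is at least twice the second one. In the
  eigenbasis of \<open>M\<close> the accuracy condition keeps the perturbation below a quarter of the eigengap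
  relative to both the top coefficient and the tail, so the potential \<open>G\<close>, a weighted tangent of the
  angle to the top eigenvector, contracts by \<open>5/7\<close> per step; and \<open>|sin \<theta>| \<le> G\<close> because the weights
  \<open>1/\<beta>i\<close> increase.\<close>

section \<open>Spectral theorem and positive square roots\<close>

definition orthonormal_on :: "'i set \<Rightarrow> ('i \<Rightarrow> 'a::real_inner) \<Rightarrow> bool" where
  "orthonormal_on I q \<longleftrightarrow> (\<forall>i\<in>I. \<forall>j\<in>I. q i \<bullet> q j = (if i = j then 1 else 0))"

lemma inner_symmetric_matrix:
  fixes A :: "real^'n^'n"
  assumes "transpose A = A"
  shows "x \<bullet> (A *v y) = (A *v x) \<bullet> y"
  by (metis assms dot_lmul_matrix transpose_matrix_vector)

lemma matrix_inv_mult: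
  fixes A :: "real^'n^'n"
  assumes "invertible A"
  shows "A ** matrix_inv A = mat 1" "matrix_inv A ** A = mat 1"
proof -
  have "\<exists>A'. A ** A' = mat 1 \<and> A' ** A = mat 1" using assms unfolding invertible_def by blast
  hence "A ** matrix_inv A = mat 1 \<and> matrix_inv A ** A = mat 1" unfolding matrix_inv_def by (rule someI_ex)
  thus "A ** matrix_inv A = mat 1" "matrix_inv A ** A = mat 1" by auto
qed

lemma invertible_if_ker_trivial:
  fixes A :: "real^'n^'n"
  assumes "\<And>x. A *v x = 0 \<Longrightarrow> x = 0"
  shows "invertible A"
  using assms matrix_left_invertible_ker invertible_left_inverse by blast

lemma linear_coeff_zero_if_quadratic_nonpos:
  fixes a b :: real
  assumes "\<forall>t. a*t + b*t^2 \<le> 0"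
  shows "a = 0"
proof (rule ccontr)
  assume a: "a \<noteq> 0"
  define c where "c = 1 / (\<bar>b\<bar> + 1)"
  have c: "c > 0" "\<bar>b*c\<bar> < 1" unfolding c_def by (auto simp: abs_mult field_simps)
  have "a*(a*c) + b*(a*c)^2 = a^2 * c * (1 + b*c)" by (simp add: power2_eq_square algebra_simps)
  moreover have "a^2 * c * (1 + b*c) > 0" using a c by (auto intro!: mult_pos_pos simp: abs_less_iff)
  ultimately show False using assms[rule_format, of "a*c"] by linarith
qed

text \<open>A maximiser of the Rayleigh quotient on the unit sphere of an invariant subspace is an
  eigenvector: the first variation of \<open>x \<bullet> (A *v x) - \<mu> * (x \<bullet> x)\<close> vanishes.\<close>
lemma symmetric_invariant_subspace_has_eigenvector:
  fixes A :: "real^'n^'n"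
  assumes sym: "transpose A = A" and sV: "subspace V" and inv: "\<forall>x\<in>V. A *v x \<in> V"
    and nontriv: "V \<noteq> {0}"
  obtains x0 \<mu> where "x0 \<in> V" "norm x0 = 1" "A *v x0 = \<mu> *\<^sub>R x0"
proof -
  define q where "q x = x \<bullet> (A *v x)" for x
  let ?S = "sphere 0 1 \<inter> V"
  obtain z where z: "z \<in> V" "z \<noteq> 0" using subspace_0[OF sV] nontriv by blast
  have "z /\<^sub>R norm z \<in> ?S" using z subspace_scale[OF sV] by auto
  moreover have "compact ?S" by (intro compact_Int_closed compact_sphere closed_subspace sV)
  moreover have "continuous_on ?S q"
    unfolding q_def by (intro continuous_intros linear_continuous_on matrix_vector_mul_bounded_linear)
  ultimately obtain x0 where x0: "x0 \<in> ?S" and max: "\<And>x. x \<in> ?S \<Longrightarrow> q x \<le> q x0"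
    using continuous_attains_sup[of ?S q] by blast
  define \<mu> where "\<mu> = q x0"
  have x0V: "x0 \<in> V" and x0x0: "x0 \<bullet> x0 = 1" using x0 by (auto simp: dot_square_norm)
  have homog: "q y \<le> \<mu> * (y \<bullet> y)" if "y \<in> V" for y
  proof (cases "y = 0")
    case True then show ?thesis by (simp add: q_def)
  next
    case False
    have "y /\<^sub>R norm y \<in> ?S" using that False subspace_scale[OF sV] by auto
    hence "q (y /\<^sub>R norm y) \<le> \<mu>" using max unfolding \<mu>_def by blast
    moreover have "q (y /\<^sub>R norm y) = q y / (norm y)^2"
      by (simp add: q_def matrix_vector_mult_scaleR power2_eq_square field_simps)
    ultimately show ?thesis using False by (simp add: dot_square_norm divide_le_eq)
  qed
  have crit: "y \<bullet> (A *v x0) = \<mu> * (x0 \<bullet> y)" if yV: "y \<in> V" for y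
  proof -
    have "\<forall>t. (2*(y \<bullet> (A *v x0)) - 2*\<mu>*(x0 \<bullet> y))*t + (q y - \<mu>*(y \<bullet> y))*t^2 \<le> 0"
    proof
      fix t :: real
      have "x0 + t *\<^sub>R y \<in> V" using x0V yV sV by (simp add: subspace_add subspace_scale)
      hence "q (x0 + t *\<^sub>R y) \<le> \<mu> * ((x0 + t *\<^sub>R y) \<bullet> (x0 + t *\<^sub>R y))" by (rule homog)
      moreover have "x0 \<bullet> (A *v y) = y \<bullet> (A *v x0)"
        using inner_symmetric_matrix[OF sym] by (metis inner_commute)
      ultimately show "(2*(y \<bullet> (A *v x0)) - 2*\<mu>*(x0 \<bullet> y))*t + (q y - \<mu>*(y \<bullet> y))*t^2 \<le> 0"
        using x0x0 unfolding q_def \<mu>_def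
        by (simp add: matrix_vector_right_distrib matrix_vector_mult_scaleR inner_add_left
            inner_add_right power2_eq_square algebra_simps inner_commute)
    qed
    from linear_coeff_zero_if_quadratic_nonpos[OF this] show ?thesis by simp
  qed
  let ?y = "A *v x0 - \<mu> *\<^sub>R x0"
  have "?y \<in> V" using inv x0V sV by (simp add: subspace_diff subspace_scale)
  hence "?y \<bullet> ?y = 0" using inv x0V x0x0
    by (simp add: crit inner_diff_left inner_diff_right algebra_simps inner_commute)
  hence "A *v x0 = \<mu> *\<^sub>R x0" by simp
  with x0V x0 that show thesis by auto
qed

lemma symmetric_invariant_subspace_eigenbasis:
  fixes A :: "real^'n^'n"
  assumes sym: "transpose A = A"
  shows "subspace V \<Longrightarrow> \<forall>x\<in>V. A *v x \<in> V \<Longrightarrow> \<exists>E. E \<subseteq> V \<and> pairwise orthogonal E \<and>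
     (\<forall>e\<in>E. norm e = 1 \<and> (\<exists>\<mu>. A *v e = \<mu> *\<^sub>R e)) \<and> span E = V"
proof (induction "dim V" arbitrary: V rule: less_induct)
  case less
  note sV = less.prems(1) and inv = less.prems(2)
  show ?case
  proof (cases "V = {0}")
    case True then show ?thesis by (intro exI[of _ "{}"]) auto
  next
    case False
    then obtain x0 \<mu> where x0V: "x0 \<in> V" and nx0: "norm x0 = 1" and eig: "A *v x0 = \<mu> *\<^sub>R x0"
      using symmetric_invariant_subspace_has_eigenvector[OF sym sV inv] by blast
    have x0x0: "x0 \<bullet> x0 = 1" using nx0 by (simp add: dot_square_norm)
    define V' where "V' = {x\<in>V. x0 \<bullet> x = 0}"
    have sV': "subspace V'" unfolding V'_def subspace_def using sV
      by (auto simp: subspace_0 subspace_add subspace_scale inner_add_right)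
    have inv': "\<forall>x\<in>V'. A *v x \<in> V'"
      using inv eig by (auto simp: V'_def inner_symmetric_matrix[OF sym])
    have "x0 \<notin> V'" using x0x0 unfolding V'_def by auto
    hence "V' \<subset> V" using x0V unfolding V'_def by blast
    hence "span V' \<subset> span V" using sV sV' by (metis span_eq_iff)
    hence "dim V' < dim V" by (rule dim_psubset)
    then obtain E' where E': "E' \<subseteq> V'" "pairwise orthogonal E'"
      "\<forall>e\<in>E'. norm e = 1 \<and> (\<exists>\<mu>. A *v e = \<mu> *\<^sub>R e)" "span E' = V'"
      using less.hyps sV' inv' by blast
    show ?thesis
    proof (intro exI[of _ "insert x0 E'"] conjI)
      show "insert x0 E' \<subseteq> V" using E'(1) x0V unfolding V'_def by auto
      show "pairwise orthogonal (insert x0 E')"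
        using E'(1,2) unfolding pairwise_insert V'_def orthogonal_def by (auto simp: inner_commute)
      show "\<forall>e\<in>insert x0 E'. norm e = 1 \<and> (\<exists>\<mu>. A *v e = \<mu> *\<^sub>R e)" using E'(3) nx0 eig by auto
      show "span (insert x0 E') = V"
      proof
        show "span (insert x0 E') \<subseteq> V"
          using E'(1) x0V sV unfolding V'_def by (intro span_minimal) auto
        show "V \<subseteq> span (insert x0 E')"
        proof
          fix x assume xV: "x \<in> V"
          have "x - (x0 \<bullet> x) *\<^sub>R x0 \<in> V'" unfolding V'_def using xV x0V sV x0x0
            by (simp add: subspace_diff subspace_scale inner_diff_right)
          thus "x \<in> span (insert x0 E')" using E'(4) span_breakdown_eq by blast
        qed
      qed
    qed
  qed
qed

lemma symmetric_orthonormal_eigenbasis: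
  fixes A :: "real^'n^'n"
  assumes "transpose A = A"
  obtains E where "finite E" "orthonormal_on E id" "span E = UNIV"
    "\<forall>e\<in>E. A *v e = (e \<bullet> (A *v e)) *\<^sub>R e"
proof -
  obtain E where E: "pairwise orthogonal E" "\<forall>e\<in>E. norm e = 1 \<and> (\<exists>\<mu>. A *v e = \<mu> *\<^sub>R e)"
    "span E = UNIV"
    using symmetric_invariant_subspace_eigenbasis[OF assms subspace_UNIV] by auto
  have "0 \<notin> E" using E(2) by force
  hence "independent E" using pairwise_orthogonal_independent E(1) by blast
  hence fin: "finite E" by (rule independent_imp_finite)
  have on: "orthonormal_on E id"
    using E(1,2) unfolding orthonormal_on_def pairwise_def orthogonal_def
    by (auto simp: dot_square_norm)
  have "\<forall>e\<in>E. A *v e = (e \<bullet> (A *v e)) *\<^sub>R e"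
  proof
    fix e assume "e \<in> E"
    then obtain \<mu> where "A *v e = \<mu> *\<^sub>R e" using E(2) by blast
    moreover have "e \<bullet> e = 1" using on \<open>e \<in> E\<close> unfolding orthonormal_on_def by auto
    ultimately show "A *v e = (e \<bullet> (A *v e)) *\<^sub>R e" by simp
  qed
  with fin on E(3) show ?thesis by (rule that)
qed

lemma orthonormal_expansion:
  fixes q :: "'i \<Rightarrow> 'a::euclidean_space"
  assumes "finite I" "orthonormal_on I q" "span (q ` I) = UNIV"
  shows "x = (\<Sum>i\<in>I. (x \<bullet> q i) *\<^sub>R q i)"
proof -
  define r where "r = x - (\<Sum>i\<in>I. (x \<bullet> q i) *\<^sub>R q i)"
  have "orthogonal r (q j)" if "j \<in> I" for j
  proof -
    have "(\<Sum>i\<in>I. (x \<bullet> q i) * (q i \<bullet> q j)) = (\<Sum>i\<in>I. if i = j then x \<bullet> q j else 0)"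
      using assms(2) that unfolding orthonormal_on_def by (intro sum.cong) auto
    thus ?thesis using assms(1) that unfolding orthogonal_def r_def
      by (simp add: inner_diff_left inner_sum_left)
  qed
  moreover have "r \<in> span (q ` I)" using assms(3) by simp
  ultimately have "orthogonal r r" using orthogonal_to_span by blast
  thus ?thesis unfolding r_def orthogonal_def by simp
qed

lemma orthonormal_parseval:
  fixes q :: "'i \<Rightarrow> 'a::euclidean_space"
  assumes "finite I" "orthonormal_on I q" "span (q ` I) = UNIV"
  shows "x \<bullet> y = (\<Sum>i\<in>I. (x \<bullet> q i) * (y \<bullet> q i))"
proof -
  have "(\<Sum>i\<in>I. (x \<bullet> q i) *\<^sub>R q i) = x" using orthonormal_expansion[OF assms] by metis
  hence "x \<bullet> y = (\<Sum>i\<in>I. (x \<bullet> q i) *\<^sub>R q i) \<bullet> y" by simp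
  also have "\<dots> = (\<Sum>i\<in>I. (x \<bullet> q i) * (q i \<bullet> y))" by (simp add: inner_sum_left)
  finally show ?thesis by (simp add: inner_commute)
qed

lemma orthonormal_card_span_UNIV:
  fixes q :: "nat \<Rightarrow> real^'n"
  assumes on: "orthonormal_on {1..d} q" and d: "d = CARD('n)"
  shows "span (q ` {1..d}) = UNIV"
proof -
  have "inj_on q {1..d}"
    using on unfolding orthonormal_on_def by (metis inj_onI one_neq_zero)
  from card_image[OF this] have card: "card (q ` {1..d}) = dim (UNIV :: (real^'n) set)"
    using d by (simp add: dim_UNIV)
  have "pairwise orthogonal (q ` {1..d})" "0 \<notin> q ` {1..d}"
    using on unfolding orthonormal_on_def pairwise_def orthogonal_def by force+
  hence "independent (q ` {1..d})" by (rule pairwise_orthogonal_independent)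
  thus ?thesis using card_eq_dim[of "q ` {1..d}" UNIV] card by auto
qed

lemma outer_sum_mult_vec:
  fixes a :: "'k \<Rightarrow> real^'x" and b :: "'k \<Rightarrow> real^'y"
  shows "(\<Sum>k\<in>K. c k *\<^sub>R outer (a k) (b k)) *v h = (\<Sum>k\<in>K. (c k * (b k \<bullet> h)) *\<^sub>R a k)"
  apply (simp add: vec_eq_iff matrix_vector_mult_def sum_component outer_def inner_vec_def
      sum_distrib_left sum_distrib_right mult.assoc mult.left_commute)
  apply (rule allI, subst sum.swap, simp add: mult_ac)
  done

lemma transpose_outer_sum_mult_vec:
  fixes a :: "'k \<Rightarrow> real^'x" and b :: "'k \<Rightarrow> real^'y"
  shows "transpose (\<Sum>k\<in>K. c k *\<^sub>R outer (a k) (b k)) *v g = (\<Sum>k\<in>K. (c k * (a k \<bullet> g)) *\<^sub>R b k)"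
  apply (simp add: vec_eq_iff matrix_vector_mult_def transpose_def sum_component outer_def
      inner_vec_def sum_distrib_left sum_distrib_right mult.assoc mult.left_commute)
  apply (rule allI, subst sum.swap, simp add: mult_ac)
  done

lemma orthonormal_coeff:
  fixes q :: "'i \<Rightarrow> 'a::real_inner"
  assumes "finite I" "orthonormal_on I q" "j \<in> I"
  shows "q j \<bullet> (\<Sum>i\<in>I. f i *\<^sub>R q i) = f j"
proof -
  have "q j \<bullet> (\<Sum>i\<in>I. f i *\<^sub>R q i) = (\<Sum>i\<in>I. if i = j then f j else 0)"
    using assms(2,3) unfolding orthonormal_on_def by (auto simp: inner_sum_right intro!: sum.cong)
  thus ?thesis using assms(1,3) by simp
qed

lemma symmetric_eigen_expansion:
  fixes A :: "real^'n^'n"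
  assumes "finite E" "orthonormal_on E id" "span E = UNIV"
    and "\<forall>e\<in>E. A *v e = (e \<bullet> (A *v e)) *\<^sub>R e"
  shows "A *v x = (\<Sum>e\<in>E. ((e \<bullet> (A *v e)) * (e \<bullet> x)) *\<^sub>R e)"
proof -
  have expansion: "x = (\<Sum>e\<in>E. (x \<bullet> e) *\<^sub>R e)"
    using orthonormal_expansion[of E id x] assms(1-3) by simp
  have "A *v x = (\<Sum>e\<in>E. (x \<bullet> e) *\<^sub>R (A *v e))"
    by (subst expansion) (simp add: vec.sum matrix_vector_mult_scaleR)
  also have "\<dots> = (\<Sum>e\<in>E. ((e \<bullet> (A *v e)) * (e \<bullet> x)) *\<^sub>R e)"
  proof (intro sum.cong refl)
    fix e assume "e \<in> E"
    hence "A *v e = (e \<bullet> (A *v e)) *\<^sub>R e" using assms(4) by blast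
    thus "(x \<bullet> e) *\<^sub>R (A *v e) = ((e \<bullet> (A *v e)) * (e \<bullet> x)) *\<^sub>R e"
      by (metis inner_commute mult.commute scaleR_scaleR)
  qed
  finally show ?thesis .
qed

lemma pd_mat_has_psd_sqrt:
  fixes A :: "real^'n^'n"
  assumes pd: "pd_mat A"
  shows "\<exists>S. psd_mat S \<and> S ** S = A"
proof -
  obtain E where fin: "finite E" and on: "orthonormal_on E id" and sp: "span E = UNIV"
    and eig: "\<forall>e\<in>E. A *v e = (e \<bullet> (A *v e)) *\<^sub>R e"
    using symmetric_orthonormal_eigenbasis[of A] pd unfolding pd_mat_def by blast
  define \<mu> where "\<mu> e = e \<bullet> (A *v e)" for e
  have \<mu>_pos: "\<mu> e > 0" if "e \<in> E" for e
  proof -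
    have "e \<noteq> 0" using on that unfolding orthonormal_on_def by force
    thus ?thesis using pd unfolding pd_mat_def \<mu>_def by auto
  qed
  define S where "S = (\<Sum>e\<in>E. sqrt (\<mu> e) *\<^sub>R outer e e)"
  have Sv: "S *v x = (\<Sum>e\<in>E. (sqrt (\<mu> e) * (e \<bullet> x)) *\<^sub>R e)" for x
    unfolding S_def by (rule outer_sum_mult_vec)
  have "(S ** S) *v x = A *v x" for x
  proof -
    have "(S ** S) *v x = S *v (S *v x)" by (simp add: matrix_vector_mul_assoc)
    also have "\<dots> = (\<Sum>e\<in>E. (sqrt (\<mu> e) * (e \<bullet> (S *v x))) *\<^sub>R e)" by (rule Sv)
    also have "\<dots> = (\<Sum>e\<in>E. (\<mu> e * (e \<bullet> x)) *\<^sub>R e)"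
    proof (intro sum.cong refl)
      fix e assume e: "e \<in> E"
      have "e \<bullet> (S *v x) = sqrt (\<mu> e) * (e \<bullet> x)"
        using orthonormal_coeff[OF fin on e] by (simp add: Sv)
      thus "(sqrt (\<mu> e) * (e \<bullet> (S *v x))) *\<^sub>R e = (\<mu> e * (e \<bullet> x)) *\<^sub>R e"
        using \<mu>_pos[OF e] by (simp add: mult.assoc[symmetric])
    qed
    also have "\<dots> = A *v x" unfolding symmetric_eigen_expansion[OF fin on sp eig, of x] \<mu>_def ..
    finally show ?thesis .
  qed
  hence "S ** S = A" by (simp add: matrix_eq)
  moreover have "transpose S *v x = S *v x" for x
    unfolding S_def by (simp only: outer_sum_mult_vec transpose_outer_sum_mult_vec)
  hence "transpose S = S" by (simp add: matrix_eq)
  moreover have "0 \<le> v \<bullet> (S *v v)" for v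
  proof -
    have "v \<bullet> (S *v v) = (\<Sum>e\<in>E. sqrt (\<mu> e) * ((e \<bullet> v) * (e \<bullet> v)))"
      unfolding Sv inner_sum_right by (simp add: inner_commute[of v] mult.assoc)
    thus ?thesis using \<mu>_pos by (auto intro!: sum_nonneg simp: less_imp_le zero_le_mult_iff)
  qed
  ultimately show ?thesis unfolding psd_mat_def by blast
qed

text \<open>Any psd square root \<open>T\<close> of \<open>A\<close> acts on an eigenvector \<open>e\<close> by \<open>sqrt \<mu>\<close>, since
  \<open>y = T e - sqrt \<mu> e\<close> satisfies \<open>T y + sqrt \<mu> y = 0\<close>, which forces \<open>y = 0\<close>.\<close>
lemma psd_sqrt_unique:
  fixes A S R :: "real^'n^'n"
  assumes pd: "pd_mat A" and "psd_mat S" "S ** S = A" "psd_mat R" "R ** R = A"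
  shows "S = R"
proof -
  obtain E where fin: "finite E" and on: "orthonormal_on E id" and sp: "span E = UNIV"
    and eig: "\<forall>e\<in>E. A *v e = (e \<bullet> (A *v e)) *\<^sub>R e"
    using symmetric_orthonormal_eigenbasis[of A] pd unfolding pd_mat_def by blast
  have on_eig: "T *v e = sqrt (e \<bullet> (A *v e)) *\<^sub>R e"
    if T: "psd_mat T" "T ** T = A" and e: "e \<in> E" for T e
  proof -
    define \<mu> where "\<mu> = e \<bullet> (A *v e)"
    have "e \<noteq> 0" using on e unfolding orthonormal_on_def by force
    hence "\<mu> > 0" using pd unfolding pd_mat_def \<mu>_def by auto
    define s where "s = sqrt \<mu>"
    have s_pos: "s > 0" and ss: "s * s = \<mu>" using \<open>\<mu> > 0\<close> unfolding s_def by auto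
    have "A *v e = \<mu> *\<^sub>R e" using eig e unfolding \<mu>_def by blast
    hence TTe: "T *v (T *v e) = (s * s) *\<^sub>R e"
      using T(2) ss by (simp add: matrix_vector_mul_assoc)
    define y where "y = T *v e - s *\<^sub>R e"
    have "T *v y + s *\<^sub>R y = T *v (T *v e) - (s * s) *\<^sub>R e"
      unfolding y_def by (simp add: matrix_vector_mult_diff_distrib matrix_vector_mult_scaleR algebra_simps)
    hence "T *v y + s *\<^sub>R y = 0" by (simp add: TTe)
    hence "y \<bullet> (T *v y) + s * (y \<bullet> y) = 0"
      by (metis inner_add_right inner_scaleR_right inner_zero_right)
    moreover have "y \<bullet> (T *v y) \<ge> 0" using T(1) unfolding psd_mat_def by auto
    ultimately have "s * (y \<bullet> y) \<le> 0" by linarith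
    hence "y \<bullet> y \<le> 0" using s_pos by (simp add: mult_le_0_iff)
    hence "y = 0" using inner_ge_zero[of y] by simp
    thus ?thesis unfolding y_def s_def \<mu>_def by simp
  qed
  have expansion: "x = (\<Sum>e\<in>E. (x \<bullet> e) *\<^sub>R e)" for x
    using orthonormal_expansion[of E id x] fin on sp by simp
  have "S *v x = R *v x" for x
  proof -
    have expand: "T *v x = (\<Sum>e\<in>E. (x \<bullet> e) *\<^sub>R (T *v e))" for T :: "real^'n^'n"
      by (subst expansion[of x]) (simp add: vec.sum matrix_vector_mult_scaleR)
    show ?thesis
      unfolding expand[of S] expand[of R] using on_eig assms(2-5) by (intro sum.cong) auto
  qed
  thus ?thesis by (simp add: matrix_eq)
qed

lemma msqrt_spec:
  fixes A :: "real^'n^'n"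
  assumes "pd_mat A"
  shows "psd_mat (msqrt A)" "msqrt A ** msqrt A = A"
proof -
  have "\<exists>!S. psd_mat S \<and> S ** S = A"
    using pd_mat_has_psd_sqrt[OF assms] psd_sqrt_unique[OF assms] by blast
  hence "psd_mat (msqrt A) \<and> msqrt A ** msqrt A = A" unfolding msqrt_def by (rule theI')
  thus "psd_mat (msqrt A)" "msqrt A ** msqrt A = A" by auto
qed

lemma msqrt_eqI:
  fixes A S :: "real^'n^'n"
  assumes "pd_mat A" "psd_mat S" "S ** S = A"
  shows "msqrt A = S"
  using psd_sqrt_unique[OF assms(1) msqrt_spec[OF assms(1)] assms(2,3)] .

lemma msqrt_symmetric:
  fixes A :: "real^'n^'n"
  assumes "pd_mat A"
  shows "transpose (msqrt A) = msqrt A"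
  using msqrt_spec(1)[OF assms] unfolding psd_mat_def by simp

lemma msqrt_invertible:
  fixes A :: "real^'n^'n"
  assumes "pd_mat A"
  shows "invertible (msqrt A)"
proof (rule invertible_if_ker_trivial)
  fix x assume "msqrt A *v x = 0"
  hence "A *v x = 0" using msqrt_spec(2)[OF assms] by (metis matrix_vector_mul_assoc matrix_vector_mult_0_right)
  thus "x = 0" using assms unfolding pd_mat_def by force
qed

section \<open>Block vectors and matrices\<close>

definition vfst :: "real^('x::finite + 'y::finite) \<Rightarrow> real^'x" where
  "vfst v = (\<chi> a. v$Inl a)"

definition vsnd :: "real^('x::finite + 'y::finite) \<Rightarrow> real^'y" where
  "vsnd v = (\<chi> a. v$Inr a)"

lemma vfst_vcat [simp]: "vfst (vcat g h) = g"
  and vsnd_vcat [simp]: "vsnd (vcat g h) = h"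
  by (simp_all add: vfst_def vsnd_def vcat_def vec_eq_iff)

lemma vcat_vfst_vsnd: "vcat (vfst v) (vsnd v) = v"
  by (simp add: vfst_def vsnd_def vcat_def vec_eq_iff split: sum.split)

lemma vec_eq_iff_vfst_vsnd: "v = w \<longleftrightarrow> vfst v = vfst w \<and> vsnd v = vsnd w"
  by (metis vcat_vfst_vsnd)

lemma vfst_simps [simp]:
  "vfst (v + w) = vfst v + vfst w" "vfst (v - w) = vfst v - vfst w"
  "vfst (c *\<^sub>R v) = c *\<^sub>R vfst v" "vfst 0 = 0"
  and vsnd_simps [simp]:
  "vsnd (v + w) = vsnd v + vsnd w" "vsnd (v - w) = vsnd v - vsnd w"
  "vsnd (c *\<^sub>R v) = c *\<^sub>R vsnd v" "vsnd 0 = 0"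
  by (simp_all add: vfst_def vsnd_def vec_eq_iff)

lemma sum_UNIV_sum_type:
  "(\<Sum>j\<in>(UNIV::('a::finite + 'b::finite) set). f j) = (\<Sum>a\<in>UNIV. f (Inl a)) + (\<Sum>b\<in>UNIV. f (Inr b))"
  by (simp only: UNIV_Plus_UNIV[symmetric] sum.Plus finite) (simp add: o_def)

lemma inner_vfst_vsnd: "v \<bullet> w = vfst v \<bullet> vfst w + vsnd v \<bullet> vsnd w"
  by (simp add: inner_vec_def sum_UNIV_sum_type vfst_def vsnd_def)

lemma vfst_blk_mult [simp]: "vfst (blk P Q R S *v v) = P *v vfst v + Q *v vsnd v"
  and vsnd_blk_mult [simp]: "vsnd (blk P Q R S *v v) = R *v vfst v + S *v vsnd v"
  by (simp_all add: vec_eq_iff sum_UNIV_sum_type blk_def matrix_vector_mult_def vfst_def vsnd_def)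

lemma transpose_blk:
  "transpose (blk P Q R S) = blk (transpose P) (transpose R) (transpose Q) (transpose S)"
  by (simp add: vec_eq_iff transpose_def blk_def split: sum.split)

lemma transpose_zero [simp]: "transpose (0::real^'n^'m) = 0"
  by (simp add: transpose_def vec_eq_iff)

lemma blk_eqI:
  assumes "\<And>v. vfst (M *v v) = P *v vfst v + Q *v vsnd v"
    and "\<And>v. vsnd (M *v v) = R *v vfst v + S *v vsnd v"
  shows "M = blk P Q R S"
  using assms by (simp add: matrix_eq vec_eq_iff_vfst_vsnd[of "M *v _"])

lemma pd_mat_blk_diag:
  assumes "pd_mat P" "pd_mat S"
  shows "pd_mat (blk P 0 0 S)"
  unfolding pd_mat_def
proof (intro conjI allI impI)
  show "transpose (blk P 0 0 S) = blk P 0 0 S"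
    using assms unfolding pd_mat_def transpose_blk by simp
  fix v :: "real^('a + 'b)" assume "v \<noteq> 0"
  hence "vfst v \<noteq> 0 \<or> vsnd v \<noteq> 0" using vec_eq_iff_vfst_vsnd[of v 0] by auto
  moreover have "0 \<le> vfst v \<bullet> (P *v vfst v)" "0 \<le> vsnd v \<bullet> (S *v vsnd v)"
    and "vfst v \<noteq> 0 \<Longrightarrow> 0 < vfst v \<bullet> (P *v vfst v)" "vsnd v \<noteq> 0 \<Longrightarrow> 0 < vsnd v \<bullet> (S *v vsnd v)"
    using assms unfolding pd_mat_def by (metis inner_zero_left order.refl matrix_vector_mult_0_right
        less_eq_real_def)+
  ultimately show "0 < v \<bullet> (blk P 0 0 S *v v)" by (auto simp: inner_vfst_vsnd)
qed

lemma psd_mat_blk_diag: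
  assumes "psd_mat P" "psd_mat S"
  shows "psd_mat (blk P 0 0 S)"
  using assms unfolding psd_mat_def transpose_blk by (simp add: inner_vfst_vsnd add_nonneg_nonneg)

lemma blk_diag_mult: "blk P 0 0 S ** blk P' 0 0 S' = blk (P ** P') 0 0 (S ** S')"
  by (rule blk_eqI) (simp_all add: matrix_vector_mul_assoc[symmetric])

lemma msqrt_blk_diag:
  assumes "pd_mat P" "pd_mat S"
  shows "msqrt (blk P 0 0 S) = blk (msqrt P) 0 0 (msqrt S)"
  using assms msqrt_spec[OF assms(1)] msqrt_spec[OF assms(2)]
  by (intro msqrt_eqI pd_mat_blk_diag psd_mat_blk_diag) (simp_all add: blk_diag_mult)

section \<open>Spectrum of the shifted CCA matrix\<close>

lemma svd_pair_eigen:
  fixes a :: "nat \<Rightarrow> real^'x" and b :: "nat \<Rightarrow> real^'y" and Tm :: "real^'y^'x"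
  assumes m: "1 \<le> m" and oa: "orthonormal_on {1..m} a" and ob: "orthonormal_on {1..m} b"
    and \<rho>_nonneg: "\<forall>k\<in>{1..m}. 0 \<le> \<rho> k" and \<rho>_le: "\<forall>k\<in>{2..m}. \<rho> k \<le> \<rho> 2"
    and Tm: "Tm = (\<Sum>k\<in>{1..m}. \<rho> k *\<^sub>R outer (a k) (b k))"
    and \<mu>: "\<rho> 2 < \<mu>" "0 < \<mu>"
    and eq1: "Tm *v h = \<mu> *\<^sub>R g" and eq2: "transpose Tm *v g = \<mu> *\<^sub>R h"
    and nz: "g \<noteq> 0 \<or> h \<noteq> 0"
  shows "\<mu> = \<rho> 1 \<and> (\<exists>\<alpha>. g = \<alpha> *\<^sub>R a 1 \<and> h = \<alpha> *\<^sub>R b 1)"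
proof -
  define \<alpha> where "\<alpha> j = a j \<bullet> g" for j
  define \<gamma> where "\<gamma> j = b j \<bullet> h" for j
  have "g = (1 / \<mu>) *\<^sub>R (Tm *v h)" "h = (1 / \<mu>) *\<^sub>R (transpose Tm *v g)"
    using eq1 eq2 \<mu> by simp_all
  hence g: "g = (\<Sum>k\<in>{1..m}. (\<rho> k * \<gamma> k / \<mu>) *\<^sub>R a k)"
    and h: "h = (\<Sum>k\<in>{1..m}. (\<rho> k * \<alpha> k / \<mu>) *\<^sub>R b k)"
    unfolding Tm outer_sum_mult_vec transpose_outer_sum_mult_vec scaleR_sum_right \<alpha>_def \<gamma>_def
    by (simp_all add: divide_inverse mult_ac)
  have \<alpha>\<gamma>: "\<mu> * \<alpha> j = \<rho> j * \<gamma> j" "\<mu> * \<gamma> j = \<rho> j * \<alpha> j" if j: "j \<in> {1..m}" for j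
  proof -
    have "\<alpha> j = a j \<bullet> (\<Sum>k\<in>{1..m}. (\<rho> k * \<gamma> k / \<mu>) *\<^sub>R a k)" unfolding \<alpha>_def using g by simp
    also have "\<dots> = \<rho> j * \<gamma> j / \<mu>" using orthonormal_coeff[OF _ oa j] by simp
    finally show "\<mu> * \<alpha> j = \<rho> j * \<gamma> j" using \<mu> by simp
    have "\<gamma> j = b j \<bullet> (\<Sum>k\<in>{1..m}. (\<rho> k * \<alpha> k / \<mu>) *\<^sub>R b k)" unfolding \<gamma>_def using h by simp
    also have "\<dots> = \<rho> j * \<alpha> j / \<mu>" using orthonormal_coeff[OF _ ob j] by simp
    finally show "\<mu> * \<gamma> j = \<rho> j * \<alpha> j" using \<mu> by simp
  qed
  have sq: "(\<mu> * \<mu>) * \<alpha> j = (\<rho> j * \<rho> j) * \<alpha> j" if "j \<in> {1..m}" for j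
  proof -
    have "(\<mu> * \<mu>) * \<alpha> j = \<mu> * (\<rho> j * \<gamma> j)" using \<alpha>\<gamma>(1)[OF that] by (simp add: mult.assoc)
    also have "\<dots> = \<rho> j * (\<mu> * \<gamma> j)" by (simp add: mult.left_commute)
    also have "\<dots> = (\<rho> j * \<rho> j) * \<alpha> j" using \<alpha>\<gamma>(2)[OF that] by (simp add: mult.assoc)
    finally show ?thesis .
  qed
  have tail: "\<alpha> j = 0 \<and> \<gamma> j = 0" if j: "j \<in> {2..m}" for j
  proof -
    have j1: "j \<in> {1..m}" using j by auto
    have "0 \<le> \<rho> j" "\<rho> j < \<mu>" using \<rho>_nonneg \<rho>_le j1 j \<mu> by force+
    hence "\<rho> j * \<rho> j < \<mu> * \<mu>" by (simp add: mult_strict_mono')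
    hence "\<alpha> j = 0" using sq[OF j1] by simp
    thus ?thesis using \<alpha>\<gamma>(2)[OF j1] \<mu> by simp
  qed
  have split: "(\<Sum>k\<in>{1..m}. f k) = f 1 + (\<Sum>k\<in>{2..m}. f k)" for f :: "nat \<Rightarrow> real^'z"
    using m by (simp add: sum.atLeast_Suc_atMost numeral_2_eq_2)
  have 1: "1 \<in> {1..m}" using m by simp
  have "\<rho> 1 * \<gamma> 1 / \<mu> = \<alpha> 1" "\<rho> 1 * \<alpha> 1 / \<mu> = \<gamma> 1"
    using \<alpha>\<gamma>[OF 1] \<mu> by (simp_all add: field_simps)
  hence g1: "g = \<alpha> 1 *\<^sub>R a 1" and h1: "h = \<gamma> 1 *\<^sub>R b 1"
    unfolding split g h by (simp_all add: tail)
  have "\<alpha> 1 \<noteq> 0 \<or> \<gamma> 1 \<noteq> 0" using nz g1 h1 by auto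
  hence "\<alpha> 1 \<noteq> 0" using \<alpha>\<gamma>[OF 1] \<mu> by auto
  hence "\<mu>^2 = (\<rho> 1)^2" using sq[OF 1] by (simp add: power2_eq_square)
  hence "\<mu> = \<rho> 1" using \<mu> \<rho>_nonneg 1 by (simp add: power2_eq_iff_nonneg)
  moreover have "\<gamma> 1 = \<alpha> 1" using \<alpha>\<gamma>(2)[OF 1] \<open>\<mu> = \<rho> 1\<close> \<mu> by simp
  ultimately show ?thesis using g1 h1 by auto
qed

lemma svd_block_eigvec:
  fixes a :: "nat \<Rightarrow> real^'x" and b :: "nat \<Rightarrow> real^'y" and Tm :: "real^'y^'x"
  assumes "1 \<le> m" "orthonormal_on {1..m} a" "orthonormal_on {1..m} b"
    and "\<forall>k\<in>{1..m}. 0 \<le> \<rho> k" "\<forall>k\<in>{2..m}. \<rho> k \<le> \<rho> 2" "0 \<le> \<rho> 2"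
    and "Tm = (\<Sum>k\<in>{1..m}. \<rho> k *\<^sub>R outer (a k) (b k))"
    and eig: "blk 0 Tm (transpose Tm) 0 *v v = \<mu> *\<^sub>R v" and "v \<noteq> 0" and "\<rho> 2 < \<mu>"
  shows "\<mu> = \<rho> 1 \<and> (\<exists>\<alpha>. v = \<alpha> *\<^sub>R vcat (a 1) (b 1))"
proof -
  have "Tm *v vsnd v = \<mu> *\<^sub>R vfst v" "transpose Tm *v vfst v = \<mu> *\<^sub>R vsnd v"
    using arg_cong[OF eig, of vfst] arg_cong[OF eig, of vsnd] by simp_all
  moreover have "vfst v \<noteq> 0 \<or> vsnd v \<noteq> 0" using \<open>v \<noteq> 0\<close> vec_eq_iff_vfst_vsnd[of v 0] by auto
  ultimately show ?thesis
    using svd_pair_eigen[OF assms(1-5,7)] assms(6,10) by (force simp: vec_eq_iff_vfst_vsnd[of v])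
qed

lemma svd_block_top_eigvec:
  fixes a :: "nat \<Rightarrow> real^'x" and b :: "nat \<Rightarrow> real^'y" and Tm :: "real^'y^'x"
  assumes "1 \<le> m" "orthonormal_on {1..m} a" "orthonormal_on {1..m} b"
    and "Tm = (\<Sum>k\<in>{1..m}. \<rho> k *\<^sub>R outer (a k) (b k))"
  shows "blk 0 Tm (transpose Tm) 0 *v vcat (a 1) (b 1) = \<rho> 1 *\<^sub>R vcat (a 1) (b 1)"
proof -
  have 1: "1 \<in> {1..m}" using assms(1) by simp
  have "Tm *v b 1 = (\<Sum>k\<in>{1..m}. if k = 1 then \<rho> 1 *\<^sub>R a 1 else 0)"
    using assms(3) unfolding assms(4) outer_sum_mult_vec orthonormal_on_def
    by (intro sum.cong) (auto simp: 1)
  hence Tb: "Tm *v b 1 = \<rho> 1 *\<^sub>R a 1" using 1 by simp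
  have "transpose Tm *v a 1 = (\<Sum>k\<in>{1..m}. if k = 1 then \<rho> 1 *\<^sub>R b 1 else 0)"
    using assms(2) unfolding assms(4) transpose_outer_sum_mult_vec orthonormal_on_def
    by (intro sum.cong) (auto simp: 1)
  hence Ta: "transpose Tm *v a 1 = \<rho> 1 *\<^sub>R b 1" using 1 by simp
  show ?thesis
    unfolding vec_eq_iff_vfst_vsnd[of "blk 0 Tm (transpose Tm) 0 *v vcat (a 1) (b 1)"]
    using Tb Ta by simp
qed

lemma shift_matrix_mult: "(lam *\<^sub>R mat 1 - C) *v v = lam *\<^sub>R v - C *v v"
  for C :: "real^'n^'n"
  by (simp add: matrix_vector_mult_diff_rdistrib scaleR_matrix_vector_assoc[symmetric])

lemma transpose_shift: "transpose (lam *\<^sub>R mat 1 - C) = lam *\<^sub>R mat 1 - transpose C"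
  for C :: "real^'n^'n"
  by (simp add: transpose_def vec_eq_iff mat_def)

lemma uminus_matrix_mult: "(- Q) *v v = - (Q *v v)"
  for Q :: "real^'n^'m"
  by (simp add: vec_eq_iff matrix_vector_mult_def sum_negf)

lemma cca_whitening:
  fixes Sxx :: "real^'x^'x" and Syy :: "real^'y^'y" and Sxy Tm :: "real^'y^'x"
  assumes pd: "pd_mat Sxx" "pd_mat Syy"
    and Tm: "Tm = minvsqrt Sxx ** Sxy ** minvsqrt Syy"
  defines "S \<equiv> blk (msqrt Sxx) 0 0 (msqrt Syy)"
  shows "blk (lam *\<^sub>R Sxx) (- Sxy) (- transpose Sxy) (lam *\<^sub>R Syy)
       = S ** (lam *\<^sub>R mat 1 - blk 0 Tm (transpose Tm) 0) ** S"
proof -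
  define Sx where "Sx = msqrt Sxx"
  define Sy where "Sy = msqrt Syy"
  have sqrt_sym: "transpose Sx = Sx" "transpose Sy = Sy"
    using msqrt_symmetric pd unfolding Sx_def Sy_def by blast+
  have "Sx ** Tm ** Sy = (Sx ** minvsqrt Sxx) ** Sxy ** (minvsqrt Syy ** Sy)"
    unfolding Tm by (simp add: matrix_mul_assoc)
  also have "\<dots> = Sxy"
    using matrix_inv_mult(1)[OF msqrt_invertible[OF pd(1)]] matrix_inv_mult(2)[OF msqrt_invertible[OF pd(2)]]
    unfolding Sx_def Sy_def minvsqrt_def by simp
  finally have STS: "Sx ** Tm ** Sy = Sxy" .
  hence STS': "Sy ** transpose Tm ** Sx = transpose Sxy"
    using sqrt_sym by (metis matrix_transpose_mul matrix_mul_assoc)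
  have sq: "Sx ** Sx = Sxx" "Sy ** Sy = Syy" using msqrt_spec(2) pd unfolding Sx_def Sy_def by blast+
  have xx: "Sx *v (Sx *v g) = Sxx *v g" and yy: "Sy *v (Sy *v h) = Syy *v h" for g h
    using sq by (simp_all add: matrix_vector_mul_assoc)
  have xy: "Sx *v (Tm *v (Sy *v h)) = Sxy *v h"
    and yx: "Sy *v (transpose Tm *v (Sx *v g)) = transpose Sxy *v g" for g h
    using STS STS' by (simp_all add: matrix_vector_mul_assoc matrix_mul_assoc del: transpose_matrix_vector)
  show ?thesis
  proof (rule HOL.sym, rule blk_eqI)
    fix v
    show "vfst ((S ** (lam *\<^sub>R mat 1 - blk 0 Tm (transpose Tm) 0) ** S) *v v)
        = (lam *\<^sub>R Sxx) *v vfst v + (- Sxy) *v vsnd v"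
      unfolding S_def Sx_def[symmetric] Sy_def[symmetric] matrix_vector_mul_assoc[symmetric]
      by (simp add: shift_matrix_mult uminus_matrix_mult matrix_vector_mult_diff_distrib
          matrix_vector_mult_scaleR xx xy scaleR_matrix_vector_assoc[symmetric]
          del: transpose_matrix_vector)
    show "vsnd ((S ** (lam *\<^sub>R mat 1 - blk 0 Tm (transpose Tm) 0) ** S) *v v)
        = (- transpose Sxy) *v vfst v + (lam *\<^sub>R Syy) *v vsnd v"
      unfolding S_def Sx_def[symmetric] Sy_def[symmetric] matrix_vector_mul_assoc[symmetric]
      by (simp add: shift_matrix_mult uminus_matrix_mult matrix_vector_mult_diff_distrib
          matrix_vector_mult_scaleR yy yx scaleR_matrix_vector_assoc[symmetric]
          del: transpose_matrix_vector)
  qed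
qed

lemma quadratic_excess:
  fixes A :: "real^'n^'n"
  assumes "transpose A = A" "A *v z = b"
  shows "(1/2 * (v \<bullet> (A *v v)) - v \<bullet> b) - (1/2 * (z \<bullet> (A *v z)) - z \<bullet> b)
       = 1/2 * ((v - z) \<bullet> (A *v (v - z)))"
proof -
  have "z \<bullet> (A *v v) = v \<bullet> b"
    using inner_symmetric_matrix[OF assms(1), of z v] assms(2) by (simp add: inner_commute)
  thus ?thesis using assms(2)
    by (simp add: matrix_vector_mult_diff_distrib inner_diff_left inner_diff_right algebra_simps)
qed

text \<open>The exact minimiser \<open>z\<close> satisfies \<open>S z = K\<inverse> (S w)\<close>: in whitened coordinates it is one step
  of power iteration with \<open>K\<inverse>\<close>.\<close>
lemma whitened_least_squares_excess:
  fixes S K :: "real^'n^'n" and v w :: "real^'n"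
  assumes S: "transpose S = S" "invertible S" and K: "transpose K = K" "invertible K"
  defines "A \<equiv> S ** K ** S" and "z \<equiv> matrix_inv (S ** K ** S) *v ((S ** S) *v w)"
    and "e \<equiv> S *v v - matrix_inv K *v (S *v w)"
  shows "(1/2 * (v \<bullet> (A *v v)) - v \<bullet> ((S ** S) *v w))
       - (1/2 * (z \<bullet> (A *v z)) - z \<bullet> ((S ** S) *v w)) = 1/2 * (e \<bullet> (K *v e))"
proof -
  have A_sym: "transpose A = A" using S K unfolding A_def by (simp add: matrix_transpose_mul matrix_mul_assoc)
  have "invertible A" using S K unfolding A_def by (intro invertible_mult)
  hence Az: "A *v z = (S ** S) *v w"
    using matrix_inv_mult(1) unfolding z_def A_def by (metis matrix_vector_mul_assoc matrix_vector_mul_lid)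
  hence "S *v (K *v (S *v z)) = S *v (S *v w)"
    unfolding A_def by (simp add: matrix_vector_mul_assoc matrix_mul_assoc)
  hence "K *v (S *v z) = S *v w"
    using inj_matrix_vector_mult[OF S(2)] by (simp add: inj_eq)
  hence Sz: "S *v z = matrix_inv K *v (S *v w)"
    using matrix_inv_mult(2)[OF K(2)] by (metis matrix_vector_mul_assoc matrix_vector_mul_lid)
  have "(v - z) \<bullet> (A *v (v - z)) = (v - z) \<bullet> (S *v (K *v (S *v (v - z))))"
    unfolding A_def by (simp add: matrix_vector_mul_assoc matrix_mul_assoc)
  also have "\<dots> = (S *v (v - z)) \<bullet> (K *v (S *v (v - z)))" by (rule inner_symmetric_matrix[OF S(1)])
  also have "S *v (v - z) = e" unfolding e_def Sz[symmetric] by (simp add: matrix_vector_mult_diff_distrib)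
  finally show ?thesis using quadratic_excess[OF A_sym Az] by simp
qed

lemma matrix_inv_eigvec:
  fixes K :: "real^'n^'n"
  assumes "invertible K" "matrix_inv K *v p = \<beta> *\<^sub>R p" "\<beta> \<noteq> 0"
  shows "K *v p = (1 / \<beta>) *\<^sub>R p"
proof -
  have "p = K *v (matrix_inv K *v p)"
    using matrix_inv_mult(1)[OF assms(1)] by (simp add: matrix_vector_mul_assoc)
  thus ?thesis using assms(2,3) by (metis matrix_vector_mult_scaleR nonzero_eq_divide_eq
        scaleR_scaleR mult.commute scaleR_one)
qed

text \<open>The shift \<open>lam\<close> lies above the top eigenvalue \<open>\<rho>1\<close> of \<open>C\<close> by less than the spectral gap,
  so \<open>1 / (lam - \<rho>1)\<close> dominates every other eigenvalue \<open>1 / (lam - \<mu>)\<close> of \<open>(lam I - C)\<inverse>\<close>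
  by a factor of at least two.\<close>
lemma shift_invert_eigengap:
  fixes C :: "real^'n^'n" and p :: "nat \<Rightarrow> real^'n"
  assumes sym: "transpose C = C"
    and top: "C *v w1 = \<rho>1 *\<^sub>R w1" "w1 \<noteq> 0"
    and unique: "\<And>v \<mu>. C *v v = \<mu> *\<^sub>R v \<Longrightarrow> v \<noteq> 0 \<Longrightarrow> \<rho>2 < \<mu> \<Longrightarrow> \<exists>\<alpha>. v = \<alpha> *\<^sub>R w1"
    and shift: "\<rho>2 < \<rho>1" "\<rho>1 < lam" "lam - \<rho>1 < \<rho>1 - \<rho>2"
    and basis: "orthonormal_on {1..d} p" "span (p ` {1..d}) = UNIV" "2 \<le> d"
    and eig: "\<forall>i\<in>{1..d}. C *v p i = (lam - 1 / \<beta> i) *\<^sub>R p i"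
    and \<beta>_pos: "\<forall>i\<in>{1..d}. 0 < \<beta> i" and \<beta>_max: "\<forall>i\<in>{1..d}. \<beta> i \<le> \<beta> 1"
  shows "\<beta> 2 \<le> \<beta> 1 / 2"
proof -
  have 1: "1 \<in> {1..d}" and 2: "2 \<in> {1..d}" using basis(3) by auto
  have unit: "p i \<noteq> 0" if "i \<in> {1..d}" for i
  proof -
    have "p i \<bullet> p i = 1" using basis(1) that unfolding orthonormal_on_def by simp
    thus ?thesis by auto
  qed
  obtain i0 where i0: "i0 \<in> {1..d}" "w1 \<bullet> p i0 \<noteq> 0"
    using orthonormal_expansion[OF _ basis(1,2), of w1] top(2) by (metis (no_types, lifting)
        finite_atLeastAtMost scale_eq_0_iff sum.neutral)
  have "\<rho>1 * (w1 \<bullet> p i0) = (C *v w1) \<bullet> p i0" using top(1) by simp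
  also have "\<dots> = w1 \<bullet> (C *v p i0)" by (rule inner_symmetric_matrix[OF sym, symmetric])
  also have "\<dots> = (lam - 1 / \<beta> i0) * (w1 \<bullet> p i0)" using eig i0(1) by simp
  finally have \<beta>i0: "1 / \<beta> i0 = lam - \<rho>1" using i0(2) by simp
  have "1 / \<beta> 1 \<le> 1 / \<beta> i0" using \<beta>_pos \<beta>_max i0(1) 1 by (simp add: frac_le)
  hence "\<rho>2 < lam - 1 / \<beta> 1" using \<beta>i0 shift(1) by linarith
  moreover have "C *v p 1 = (lam - 1 / \<beta> 1) *\<^sub>R p 1" using eig 1 by blast
  ultimately obtain \<alpha>1 where "p 1 = \<alpha>1 *\<^sub>R w1" using unique unit[OF 1] by blast
  have "lam - 1 / \<beta> 2 \<le> \<rho>2"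
  proof (rule ccontr)
    assume "\<not> ?thesis"
    moreover have "C *v p 2 = (lam - 1 / \<beta> 2) *\<^sub>R p 2" using eig 2 by blast
    ultimately obtain \<alpha>2 where "p 2 = \<alpha>2 *\<^sub>R w1" using unique unit[OF 2] by force
    moreover have "p 1 \<bullet> p 2 = (if (1::nat) = 2 then 1 else 0)"
      using basis(1) 1 2 unfolding orthonormal_on_def by blast
    ultimately show False using \<open>p 1 = \<alpha>1 *\<^sub>R w1\<close> unit[OF 1] unit[OF 2] top(2) by auto
  qed
  hence "2 / \<beta> 1 \<le> 1 / \<beta> 2" using \<beta>i0 \<open>1 / \<beta> 1 \<le> 1 / \<beta> i0\<close> shift by linarith
  thus ?thesis using \<beta>_pos 1 2 by (simp add: field_simps)
qed

lemma eigenbasis_inverse_coeff: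
  fixes K :: "real^'n^'n" and q y :: "real^'n"
  assumes "transpose K = K" "invertible K" "matrix_inv K *v q = b *\<^sub>R q" "b \<noteq> 0"
  shows "(matrix_inv K *v y) \<bullet> q = b * (y \<bullet> q)"
proof -
  have "(matrix_inv K *v y) \<bullet> q = b * ((matrix_inv K *v y) \<bullet> (K *v q))"
    using matrix_inv_eigvec[OF assms(2-4)] assms(4) by simp
  also have "(matrix_inv K *v y) \<bullet> (K *v q) = y \<bullet> q"
    using inner_symmetric_matrix[OF assms(1)] matrix_inv_mult(1)[OF assms(2)]
    by (metis inner_commute matrix_vector_mul_assoc matrix_vector_mul_lid)
  finally show ?thesis .
qed

lemma eigenbasis_quadratic_form:
  fixes K :: "real^'n^'n" and p :: "nat \<Rightarrow> real^'n"
  assumes basis: "finite I" "orthonormal_on I p" "span (p ` I) = UNIV"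
    and "transpose K = K" "\<forall>i\<in>I. K *v p i = (1 / \<beta> i) *\<^sub>R p i"
  shows "e \<bullet> (K *v e) = (\<Sum>i\<in>I. (e \<bullet> p i)^2 / \<beta> i)"
proof -
  have "e \<bullet> (K *v e) = (\<Sum>i\<in>I. (e \<bullet> p i) * ((K *v e) \<bullet> p i))"
    by (rule orthonormal_parseval[OF basis])
  also have "\<dots> = (\<Sum>i\<in>I. (e \<bullet> p i)^2 / \<beta> i)"
    using assms(4,5) by (intro sum.cong) (auto simp: inner_symmetric_matrix[symmetric] power2_eq_square)
  finally show ?thesis .
qed

section \<open>Perturbed power iteration\<close>

definition coef_ratio :: "nat \<Rightarrow> (nat \<Rightarrow> real) \<Rightarrow> (nat \<Rightarrow> real) \<Rightarrow> real" where
  "coef_ratio d \<beta> c = sqrt (\<Sum>i\<in>{2..d}. (c i)^2 / \<beta> i) / sqrt ((c 1)^2 / \<beta> 1)"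

lemma coef_ratio_scale:
  assumes "k \<noteq> 0"
  shows "coef_ratio d \<beta> (\<lambda>i. c i / k) = coef_ratio d \<beta> c"
proof -
  define N where "N = (\<Sum>i\<in>{2..d}. (c i)^2 / \<beta> i)"
  define D where "D = (c 1)^2 / \<beta> 1"
  have "(\<Sum>i\<in>{2..d}. (c i / k)^2 / \<beta> i) = N / k^2"
    unfolding N_def by (simp add: power_divide sum_divide_distrib mult.commute)
  moreover have "(c 1 / k)^2 / \<beta> 1 = D / k^2"
    unfolding D_def by (simp add: power_divide mult.commute)
  ultimately have "coef_ratio d \<beta> (\<lambda>i. c i / k) = (sqrt N / \<bar>k\<bar>) / (sqrt D / \<bar>k\<bar>)"
    unfolding coef_ratio_def by (simp add: real_sqrt_divide)
  also have "\<dots> = sqrt N / sqrt D" using assms by (cases "sqrt D = 0") (simp_all add: field_simps)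
  finally show ?thesis unfolding coef_ratio_def N_def D_def .
qed

lemma sum_weighted_squares_nonneg:
  fixes \<beta> c :: "'i \<Rightarrow> real"
  assumes "\<forall>i\<in>I. 0 < \<beta> i"
  shows "0 \<le> (\<Sum>i\<in>I. (c i)^2 / \<beta> i)"
proof (rule sum_nonneg)
  fix i assume "i \<in> I"
  hence "0 < \<beta> i" using assms by blast
  thus "0 \<le> (c i)^2 / \<beta> i" by simp
qed

lemma coef_ratio_nonneg:
  assumes "1 \<le> d" "\<forall>i\<in>{1..d}. 0 < \<beta> i"
  shows "0 \<le> coef_ratio d \<beta> c"
proof -
  have "0 \<le> (\<Sum>i\<in>{2..d}. (c i)^2 / \<beta> i)" using assms(2) by (intro sum_weighted_squares_nonneg) auto
  moreover have "1 \<in> {1..d}" using assms(1) by simp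
  hence "0 \<le> (c 1)^2 / \<beta> 1" using assms(2) by (simp add: less_imp_le)
  ultimately show ?thesis unfolding coef_ratio_def by simp
qed

lemma perturbed_top_coeff_lower:
  fixes \<beta> c c' e \<kappa> X :: real
  assumes "0 < \<beta>" "c' = \<beta> * c + e" "e^2 / \<beta> \<le> X" "sqrt X \<le> \<kappa> * sqrt (c^2 / \<beta>)"
  shows "(\<beta> - \<kappa>) * sqrt (c^2 / \<beta>) \<le> sqrt (c'^2 / \<beta>)"
proof -
  have "\<beta> * sqrt (c^2 / \<beta>) - sqrt (e^2 / \<beta>) = (\<beta> * \<bar>c\<bar> - \<bar>e\<bar>) / sqrt \<beta>"
    using assms(1) by (simp add: real_sqrt_divide diff_divide_distrib real_div_sqrt)
  also have "\<dots> \<le> \<bar>c'\<bar> / sqrt \<beta>"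
    using assms(1,2) by (intro divide_right_mono) (auto simp: abs_mult)
  finally have "\<beta> * sqrt (c^2 / \<beta>) - sqrt (e^2 / \<beta>) \<le> sqrt (c'^2 / \<beta>)"
    by (simp add: real_sqrt_divide)
  moreover have "sqrt (e^2 / \<beta>) \<le> sqrt X" using assms(3) by (rule real_sqrt_le_mono)
  moreover have "(\<beta> - \<kappa>) * sqrt (c^2 / \<beta>) = \<beta> * sqrt (c^2 / \<beta>) - \<kappa> * sqrt (c^2 / \<beta>)"
    by (simp add: algebra_simps)
  ultimately show ?thesis using assms(4) by linarith
qed

lemma perturbed_tail_coeffs_upper:
  fixes \<beta> c c' e :: "nat \<Rightarrow> real"
  assumes "\<forall>i\<in>W. 0 < \<beta> i \<and> \<beta> i \<le> b" "\<forall>i\<in>W. c' i = \<beta> i * c i + e i"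
  shows "sqrt (\<Sum>i\<in>W. (c' i)^2 / \<beta> i)
       \<le> b * sqrt (\<Sum>i\<in>W. (c i)^2 / \<beta> i) + sqrt (\<Sum>i\<in>W. (e i)^2 / \<beta> i)"
proof -
  have L2: "sqrt (\<Sum>i\<in>W. (f i)^2 / \<beta> i) = L2_set (\<lambda>i. f i / sqrt (\<beta> i)) W" for f
    using assms(1) unfolding L2_set_def by (intro arg_cong[where f=sqrt] sum.cong) (auto simp: power_divide)
  have "L2_set (\<lambda>i. c' i / sqrt (\<beta> i)) W
      = L2_set (\<lambda>i. sqrt (\<beta> i) * c i + e i / sqrt (\<beta> i)) W"
  proof (rule L2_set_cong[OF refl])
    fix i assume "i \<in> W"
    hence "0 < \<beta> i" "c' i = \<beta> i * c i + e i" using assms by auto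
    moreover from this(1) have "\<beta> i / sqrt (\<beta> i) = sqrt (\<beta> i)" by (simp add: real_div_sqrt)
    ultimately show "c' i / sqrt (\<beta> i) = sqrt (\<beta> i) * c i + e i / sqrt (\<beta> i)"
      by (metis add_divide_distrib times_divide_eq_left mult.commute)
  qed
  also have "\<dots> \<le> L2_set (\<lambda>i. sqrt (\<beta> i) * c i) W + L2_set (\<lambda>i. e i / sqrt (\<beta> i)) W"
    by (rule L2_set_triangle_ineq)
  also have "L2_set (\<lambda>i. sqrt (\<beta> i) * c i) W \<le> L2_set (\<lambda>i. b * (c i / sqrt (\<beta> i))) W"
  proof -
    have "L2_set (\<lambda>i. \<bar>sqrt (\<beta> i) * c i\<bar>) W \<le> L2_set (\<lambda>i. \<bar>b * (c i / sqrt (\<beta> i))\<bar>) W"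
    proof (rule L2_set_mono)
      fix i assume "i \<in> W"
      hence "0 < \<beta> i" "\<beta> i \<le> b" using assms(1) by auto
      hence "sqrt (\<beta> i) * \<bar>c i\<bar> \<le> b * (\<bar>c i\<bar> / sqrt (\<beta> i))"
        by (simp add: field_simps mult_right_mono)
      thus "\<bar>sqrt (\<beta> i) * c i\<bar> \<le> \<bar>b * (c i / sqrt (\<beta> i))\<bar>"
        using \<open>0 < \<beta> i\<close> \<open>\<beta> i \<le> b\<close> by (simp add: abs_mult)
    qed simp
    moreover have "L2_set (\<lambda>i. \<bar>f i\<bar>) W = L2_set f W" for f :: "nat \<Rightarrow> real"
      unfolding L2_set_def by simp
    ultimately show ?thesis by metis
  qed
  also have "L2_set (\<lambda>i. b * (c i / sqrt (\<beta> i))) W = b * L2_set (\<lambda>i. c i / sqrt (\<beta> i)) W"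
    using assms(1) by (cases "W = {}") (auto simp: L2_set_right_distrib)
  finally show ?thesis unfolding L2 by simp
qed

text \<open>One step of the perturbed power iteration in eigencoordinates: the top coefficient grows
  at least by \<open>(3\<beta>1 + \<beta>2)/4\<close>, the others by at most \<open>(\<beta>1 + 3\<beta>2)/4\<close>, and with
  \<open>\<beta>2 \<le> \<beta>1/2\<close> the ratio of these factors is at most \<open>5/7\<close>.\<close>
lemma perturbed_power_coeff_step:
  fixes \<beta> c c' e :: "nat \<Rightarrow> real"
  assumes d: "2 \<le> d" and \<beta>_pos: "\<forall>i\<in>{1..d}. 0 < \<beta> i" and \<beta>_le: "\<forall>i\<in>{2..d}. \<beta> i \<le> \<beta> 2"
    and gap: "\<beta> 2 \<le> \<beta> 1 / 2"
    and step: "\<forall>i\<in>{1..d}. c' i = \<beta> i * c i + e i" and top: "c 1 \<noteq> 0"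
    and err: "(\<Sum>i\<in>{1..d}. (e i)^2 / \<beta> i)
              \<le> min (\<Sum>i\<in>{2..d}. (c i)^2 / \<beta> i) ((c 1)^2 / \<beta> 1) * (\<beta> 1 - \<beta> 2)^2 / 16"
  shows "c' 1 \<noteq> 0 \<and> coef_ratio d \<beta> c' \<le> 5/7 * coef_ratio d \<beta> c"
proof -
  define \<delta> where "\<delta> = \<beta> 1 - \<beta> 2"
  define N where "N = (\<Sum>i\<in>{2..d}. (c i)^2 / \<beta> i)"
  define D where "D = (c 1)^2 / \<beta> 1"
  define X where "X = (\<Sum>i\<in>{1..d}. (e i)^2 / \<beta> i)"
  have 1: "1 \<in> {1..d}" and 2: "2 \<in> {1..d}" using d by auto
  have \<beta>_pos': "0 < \<beta> i" if "i \<in> {1..d}" for i using \<beta>_pos that by blast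
  have \<beta>1: "0 < \<beta> 1" and \<beta>2: "0 < \<beta> 2" using \<beta>_pos' 1 2 by auto
  have \<delta>: "0 \<le> \<delta>" "\<delta> \<le> \<beta> 1" using gap \<beta>2 unfolding \<delta>_def by auto
  have N: "0 \<le> N" unfolding N_def using \<beta>_pos by (intro sum_weighted_squares_nonneg) auto
  have D: "0 < D" unfolding D_def using top \<beta>1 by simp
  have sqrt_X: "sqrt X \<le> \<delta>/4 * sqrt N" "sqrt X \<le> \<delta>/4 * sqrt D"
  proof -
    have "sqrt X \<le> sqrt (min N D * (\<delta>/4)^2)"
      using err unfolding X_def N_def D_def \<delta>_def by (simp add: power_divide)
    also have "\<dots> = \<delta>/4 * min (sqrt N) (sqrt D)" using \<delta> by (simp add: real_sqrt_mult min_def)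
    finally show "sqrt X \<le> \<delta>/4 * sqrt N" "sqrt X \<le> \<delta>/4 * sqrt D"
      using \<delta> by (auto simp: mult_left_mono min_le_iff_disj order_trans)
  qed
  have "(e 1)^2 / \<beta> 1 \<le> X"
    unfolding X_def using 1 by (intro member_le_sum) (auto intro!: divide_nonneg_pos \<beta>_pos')
  hence den: "(\<beta> 1 - \<delta>/4) * sqrt D \<le> sqrt ((c' 1)^2 / \<beta> 1)"
    using perturbed_top_coeff_lower[OF \<beta>1 _ _ sqrt_X(2)[unfolded D_def]] step 1 unfolding D_def by blast
  have "sqrt (\<Sum>i\<in>{2..d}. (c' i)^2 / \<beta> i)
        \<le> \<beta> 2 * sqrt N + sqrt (\<Sum>i\<in>{2..d}. (e i)^2 / \<beta> i)"
    unfolding N_def using \<beta>_pos \<beta>_le step by (intro perturbed_tail_coeffs_upper) auto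
  also have "sqrt (\<Sum>i\<in>{2..d}. (e i)^2 / \<beta> i) \<le> sqrt X"
    unfolding X_def by (intro real_sqrt_le_mono sum_mono2) (auto intro!: divide_nonneg_pos \<beta>_pos')
  finally have num: "sqrt (\<Sum>i\<in>{2..d}. (c' i)^2 / \<beta> i) \<le> (\<beta> 2 + \<delta>/4) * sqrt N"
    using sqrt_X(1) by (simp add: algebra_simps)
  have pos: "0 < (\<beta> 1 - \<delta>/4) * sqrt D" using \<delta> \<beta>1 D by simp
  hence "c' 1 \<noteq> 0" using den by auto
  moreover have "coef_ratio d \<beta> c' \<le> ((\<beta> 2 + \<delta>/4) * sqrt N) / ((\<beta> 1 - \<delta>/4) * sqrt D)"
    unfolding coef_ratio_def using num den pos N \<beta>2 \<delta> by (intro frac_le) auto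
  moreover have "(\<beta> 2 + \<delta>/4) / (\<beta> 1 - \<delta>/4) \<le> 5/7"
    using gap \<beta>1 \<delta> unfolding \<delta>_def by (simp add: field_simps)
  hence "((\<beta> 2 + \<delta>/4) * sqrt N) / ((\<beta> 1 - \<delta>/4) * sqrt D) \<le> 5/7 * coef_ratio d \<beta> c"
    unfolding coef_ratio_def N_def[symmetric] D_def[symmetric] using N D
    by (metis divide_nonneg_pos mult_right_mono real_sqrt_ge_zero real_sqrt_gt_zero times_divide_times_eq)
  ultimately show ?thesis by linarith
qed

lemma perturbed_power_step:
  fixes K :: "real^'n^'n" and p :: "nat \<Rightarrow> real^'n" and r r' :: "real^'n"
  defines "e \<equiv> r' - matrix_inv K *v r"
  assumes basis: "orthonormal_on {1..d} p" "span (p ` {1..d}) = UNIV" "2 \<le> d"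
    and K: "transpose K = K" "invertible K" "\<forall>i\<in>{1..d}. matrix_inv K *v p i = \<beta> i *\<^sub>R p i"
    and \<beta>: "\<forall>i\<in>{1..d}. 0 < \<beta> i" "\<forall>i\<in>{2..d}. \<beta> i \<le> \<beta> 2" "\<beta> 2 \<le> \<beta> 1 / 2"
    and top: "r \<bullet> p 1 \<noteq> 0"
    and err: "(1/2 * (e \<bullet> (K *v e))) / (r \<bullet> r)
      \<le> min (\<Sum>i\<in>{2..d}. ((r \<bullet> p i) / norm r)^2 / \<beta> i) (((r \<bullet> p 1) / norm r)^2 / \<beta> 1)
         * (\<beta> 1 - \<beta> 2)^2 / 32"
  shows "r' \<bullet> p 1 \<noteq> 0 \<and> coef_ratio d \<beta> (\<lambda>i. r' \<bullet> p i) \<le> 5/7 * coef_ratio d \<beta> (\<lambda>i. r \<bullet> p i)"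
proof -
  define R where "R = (norm r)^2"
  have R: "0 < R" "r \<bullet> r = R" using top unfolding R_def by (auto simp: dot_square_norm)
  have step: "\<forall>i\<in>{1..d}. r' \<bullet> p i = \<beta> i * (r \<bullet> p i) + e \<bullet> p i"
  proof
    fix i assume i: "i \<in> {1..d}"
    have "matrix_inv K *v p i = \<beta> i *\<^sub>R p i" "\<beta> i \<noteq> 0" using K(3) \<beta>(1) i by force+
    hence "(matrix_inv K *v r) \<bullet> p i = \<beta> i * (r \<bullet> p i)" by (rule eigenbasis_inverse_coeff[OF K(1,2)])
    thus "r' \<bullet> p i = \<beta> i * (r \<bullet> p i) + e \<bullet> p i" unfolding e_def by (simp add: inner_diff_left)
  qed
  have "\<forall>i\<in>{1..d}. K *v p i = (1 / \<beta> i) *\<^sub>R p i"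
  proof
    fix i assume i: "i \<in> {1..d}"
    have "matrix_inv K *v p i = \<beta> i *\<^sub>R p i" "\<beta> i \<noteq> 0" using K(3) \<beta>(1) i by force+
    thus "K *v p i = (1 / \<beta> i) *\<^sub>R p i" by (rule matrix_inv_eigvec[OF K(2)])
  qed
  hence eKe: "e \<bullet> (K *v e) = (\<Sum>i\<in>{1..d}. (e \<bullet> p i)^2 / \<beta> i)"
    by (intro eigenbasis_quadratic_form[OF _ basis(1,2) K(1)]) simp
  define N where "N = (\<Sum>i\<in>{2..d}. (r \<bullet> p i)^2 / \<beta> i)"
  define D where "D = (r \<bullet> p 1)^2 / \<beta> 1"
  have "(\<Sum>i\<in>{2..d}. ((r \<bullet> p i) / norm r)^2 / \<beta> i) = N / R"
    unfolding N_def R_def sum_divide_distrib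
    by (intro sum.cong refl) (simp add: power_divide divide_divide_eq_left mult.commute)
  moreover have "((r \<bullet> p 1) / norm r)^2 / \<beta> 1 = D / R"
    unfolding D_def R_def by (simp add: power_divide divide_divide_eq_left mult.commute)
  ultimately have "((\<Sum>i\<in>{1..d}. (e \<bullet> p i)^2 / \<beta> i) / 2) / R
      \<le> min (N / R) (D / R) * (\<beta> 1 - \<beta> 2)^2 / 32"
    using err unfolding eKe R(2) by simp
  also have "min (N / R) (D / R) = min N D / R" using R(1) by (simp add: min_divide_distrib_right)
  also have "min N D / R * (\<beta> 1 - \<beta> 2)^2 / 32 = (min N D * (\<beta> 1 - \<beta> 2)^2 / 32) / R" by simp
  finally have "(\<Sum>i\<in>{1..d}. (e \<bullet> p i)^2 / \<beta> i) / 2 \<le> min N D * (\<beta> 1 - \<beta> 2)^2 / 32"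
    using R(1) by (subst (asm) divide_le_cancel) blast
  hence "(\<Sum>i\<in>{1..d}. (e \<bullet> p i)^2 / \<beta> i) \<le> min N D * (\<beta> 1 - \<beta> 2)^2 / 16" by linarith
  thus ?thesis using perturbed_power_coeff_step[OF basis(3) \<beta> step top] unfolding N_def D_def by simp
qed

lemma inexact_shift_invert_iteration:
  fixes S K :: "real^'n^'n" and w :: "nat \<Rightarrow> real^'n" and p :: "nat \<Rightarrow> real^'n"
  defines "r \<equiv> \<lambda>t. S *v w t"
    and "f \<equiv> \<lambda>t v. 1/2 * (v \<bullet> ((S ** K ** S) *v v)) - v \<bullet> ((S ** S) *v w t)"
    and "z \<equiv> \<lambda>t. matrix_inv (S ** K ** S) *v ((S ** S) *v w t)"
  assumes S: "transpose S = S" "invertible S" and K: "transpose K = K" "invertible K"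
    and basis: "orthonormal_on {1..d} p" "span (p ` {1..d}) = UNIV" "2 \<le> d"
    and eig: "\<forall>i\<in>{1..d}. matrix_inv K *v p i = \<beta> i *\<^sub>R p i"
    and \<beta>: "\<forall>i\<in>{1..d}. 0 < \<beta> i" "\<forall>i\<in>{2..d}. \<beta> i \<le> \<beta> 2" "\<beta> 2 \<le> \<beta> 1 / 2"
    and start: "r 0 \<bullet> p 1 \<noteq> 0"
    and err: "\<And>t. (f t (w (Suc t)) - f t (z t)) / (w t \<bullet> ((S ** S) *v w t))
      \<le> min (\<Sum>i\<in>{2..d}. ((r t \<bullet> p i) / norm (r t))^2 / \<beta> i) (((r t \<bullet> p 1) / norm (r t))^2 / \<beta> 1)
         * (\<beta> 1 - \<beta> 2)^2 / 32"
  shows "r t \<bullet> p 1 \<noteq> 0 \<and> coef_ratio d \<beta> (\<lambda>i. r t \<bullet> p i) \<le> (5/7)^t * coef_ratio d \<beta> (\<lambda>i. r 0 \<bullet> p i)"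
proof (induction t)
  case 0
  show ?case using start by simp
next
  case (Suc t)
  have wBw: "w t \<bullet> ((S ** S) *v w t) = r t \<bullet> r t"
    unfolding r_def using inner_symmetric_matrix[OF S(1)] by (simp add: matrix_vector_mul_assoc[symmetric])
  have excess: "f t (w (Suc t)) - f t (z t) = 1/2 * ((r (Suc t) - matrix_inv K *v r t)
      \<bullet> (K *v (r (Suc t) - matrix_inv K *v r t)))"
    unfolding f_def z_def r_def by (rule whitened_least_squares_excess[OF S K])
  have "1/2 * ((r (Suc t) - matrix_inv K *v r t) \<bullet> (K *v (r (Suc t) - matrix_inv K *v r t))) / (r t \<bullet> r t)
      \<le> min (\<Sum>i\<in>{2..d}. ((r t \<bullet> p i) / norm (r t))^2 / \<beta> i) (((r t \<bullet> p 1) / norm (r t))^2 / \<beta> 1)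
         * (\<beta> 1 - \<beta> 2)^2 / 32"
    using err[of t] unfolding excess wBw .
  from perturbed_power_step[OF basis K eig \<beta> conjunct1[OF Suc.IH] this]
  show ?case using Suc.IH by (auto simp: mult.assoc elim!: order_trans)
qed

lemma sin_vangle_le_coef_ratio:
  fixes v :: "real^'n" and p :: "nat \<Rightarrow> real^'n"
  assumes basis: "orthonormal_on {1..d} p" "span (p ` {1..d}) = UNIV" "1 \<le> d"
    and \<beta>: "\<forall>i\<in>{1..d}. 0 < \<beta> i" "\<forall>i\<in>{1..d}. \<beta> i \<le> \<beta> 1"
    and top: "v \<bullet> p 1 \<noteq> 0"
  shows "\<bar>sin (vangle v (p 1))\<bar> \<le> coef_ratio d \<beta> (\<lambda>i. v \<bullet> p i)"
proof -
  define R where "R = (norm v)^2"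
  define N where "N = (\<Sum>i\<in>{2..d}. (v \<bullet> p i)^2)"
  have 1: "1 \<in> {1..d}" using basis(3) by simp
  have p1: "norm (p 1) = 1" using basis(1) 1 unfolding orthonormal_on_def by (simp add: norm_eq_sqrt_inner)
  have "R = (\<Sum>i\<in>{1..d}. (v \<bullet> p i)^2)"
    unfolding R_def using orthonormal_parseval[OF _ basis(1,2), of v v]
    by (simp add: dot_square_norm power2_eq_square)
  also have "\<dots> = (v \<bullet> p 1)^2 + N" unfolding N_def using basis(3)
    by (simp add: sum.atLeast_Suc_atMost numeral_2_eq_2)
  finally have R_split: "R = (v \<bullet> p 1)^2 + N" .
  have N: "0 \<le> N" unfolding N_def by (simp add: sum_nonneg)
  have R_pos: "0 < R" using R_split N top by (simp add: add_pos_nonneg)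
  define x where "x = (v \<bullet> p 1) / norm v"
  have "\<bar>v \<bullet> p 1\<bar> \<le> norm v" using Cauchy_Schwarz_ineq2[of v "p 1"] p1 by simp
  hence x1: "\<bar>x\<bar> \<le> 1" unfolding x_def using R_pos unfolding R_def by (simp add: divide_le_eq)
  have "\<bar>sin (vangle v (p 1))\<bar> = sqrt (1 - x^2)"
    unfolding vangle_def x_def[symmetric] p1 using x1 by (simp add: x_def sin_arccos_abs abs_square_le_1)
  also have "1 - x^2 = (R - (v \<bullet> p 1)^2) / R"
    using R_pos unfolding x_def R_def by (simp add: power_divide field_simps)
  also have "\<dots> = N / R" using R_split by simp
  also have "N / R \<le> \<beta> 1 * (\<Sum>i\<in>{2..d}. (v \<bullet> p i)^2 / \<beta> i) / (v \<bullet> p 1)^2"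
  proof -
    have "N \<le> \<beta> 1 * (\<Sum>i\<in>{2..d}. (v \<bullet> p i)^2 / \<beta> i)"
      unfolding N_def sum_distrib_left using \<beta>
      by (intro sum_mono) (auto simp: field_simps mult_right_mono)
    thus ?thesis using R_split N top by (intro frac_le) auto
  qed
  finally have "\<bar>sin (vangle v (p 1))\<bar> \<le> sqrt ((\<Sum>i\<in>{2..d}. (v \<bullet> p i)^2 / \<beta> i) / ((v \<bullet> p 1)^2 / \<beta> 1))"
    using \<beta>(1) 1 by (simp add: real_sqrt_le_mono field_simps)
  thus ?thesis unfolding coef_ratio_def by (simp add: real_sqrt_divide real_sqrt_mult)
qed

lemma geometric_decay_threshold:
  fixes g :: "nat \<Rightarrow> real" and b \<eta> :: real
  assumes "1 < b" "0 < \<eta>" "0 \<le> g 0" "g t \<le> (1 / b) ^ t * g 0" "\<lceil>log b (g 0 / \<eta>)\<rceil> \<le> int t"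
  shows "g t \<le> \<eta>"
proof (cases "g 0 = 0")
  case True
  thus ?thesis using assms(2,4) by simp
next
  case False
  hence "0 < g 0 / \<eta>" using assms(2,3) by simp
  moreover have "log b (g 0 / \<eta>) \<le> real t" using assms(5) by (simp add: ceiling_le_iff)
  ultimately have "g 0 / \<eta> \<le> b ^ t"
    using assms(1) by (simp add: log_le_iff powr_realpow)
  hence "(1 / b) ^ t * g 0 \<le> \<eta>" using assms(1,2) by (simp add: power_one_over field_simps)
  thus ?thesis using assms(4) by simp
qed

lemma cca_shift_invert_spectrum:
  fixes a :: "nat \<Rightarrow> real^'x" and b :: "nat \<Rightarrow> real^'y" and Tm :: "real^'y^'x"
    and p :: "nat \<Rightarrow> real^('x + 'y)" and lam :: real
  defines "K \<equiv> lam *\<^sub>R mat 1 - blk 0 Tm (transpose Tm) 0"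
  assumes svd: "1 \<le> m" "orthonormal_on {1..m} a" "orthonormal_on {1..m} b"
      "\<forall>k\<in>{1..m}. 0 \<le> \<rho> k" "\<forall>k\<in>{2..m}. \<rho> k \<le> \<rho> 2" "0 \<le> \<rho> 2"
      "Tm = (\<Sum>k\<in>{1..m}. \<rho> k *\<^sub>R outer (a k) (b k))"
    and shift: "\<rho> 2 < \<rho> 1" "\<rho> 1 < lam" "lam - \<rho> 1 < \<rho> 1 - \<rho> 2"
    and basis: "orthonormal_on {1..d} p" "span (p ` {1..d}) = UNIV" "2 \<le> d"
    and eig: "\<forall>i\<in>{1..d}. matrix_inv K *v p i = \<beta> i *\<^sub>R p i"
    and \<beta>: "\<forall>i\<in>{1..d}. 0 < \<beta> i" "\<forall>i\<in>{1..d}. \<beta> i \<le> \<beta> 1"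
  shows "invertible K" "\<beta> 2 \<le> \<beta> 1 / 2"
proof -
  define C where "C = blk 0 Tm (transpose Tm) 0"
  have K: "K *v v = lam *\<^sub>R v - C *v v" for v unfolding K_def C_def by (rule shift_matrix_mult)
  have C_sym: "transpose C = C" unfolding C_def transpose_blk by simp
  have C_eig: "\<mu> = \<rho> 1 \<and> (\<exists>\<alpha>. v = \<alpha> *\<^sub>R vcat (a 1) (b 1))"
    if "C *v v = \<mu> *\<^sub>R v" "v \<noteq> 0" "\<rho> 2 < \<mu>" for v \<mu>
    using svd_block_eigvec[OF svd] that unfolding C_def by blast
  show K_inv: "invertible K"
  proof (rule invertible_if_ker_trivial, rule ccontr)
    fix v assume "K *v v = 0" "v \<noteq> 0"
    hence "C *v v = lam *\<^sub>R v" by (simp add: K)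
    thus False using C_eig[OF _ \<open>v \<noteq> 0\<close>] shift by force
  qed
  have C_p: "\<forall>i\<in>{1..d}. C *v p i = (lam - 1 / \<beta> i) *\<^sub>R p i"
  proof
    fix i assume i: "i \<in> {1..d}"
    have "matrix_inv K *v p i = \<beta> i *\<^sub>R p i" "\<beta> i \<noteq> 0" using eig \<beta>(1) i by force+
    hence "K *v p i = (1 / \<beta> i) *\<^sub>R p i" by (rule matrix_inv_eigvec[OF K_inv])
    thus "C *v p i = (lam - 1 / \<beta> i) *\<^sub>R p i" unfolding K by (simp add: algebra_simps)
  qed
  have top: "C *v vcat (a 1) (b 1) = \<rho> 1 *\<^sub>R vcat (a 1) (b 1)"
    unfolding C_def by (rule svd_block_top_eigvec[OF svd(1-3,7)])
  have "a 1 \<bullet> a 1 = 1" using svd(1,2) unfolding orthonormal_on_def by simp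
  hence top_nz: "vcat (a 1) (b 1) \<noteq> 0" by (metis inner_zero_left vfst_vcat vfst_simps(4) zero_neq_one)
  show "\<beta> 2 \<le> \<beta> 1 / 2"
    by (rule shift_invert_eigengap[OF C_sym top top_nz _ shift basis C_p \<beta>]) (use C_eig in blast)
qed

theorem lemma5:
  fixes N :: nat and x :: "nat \<Rightarrow> real^'x" and y :: "nat \<Rightarrow> real^'y"
    and \<rho> :: "nat \<Rightarrow> real" and a :: "nat \<Rightarrow> real^'x" and b :: "nat \<Rightarrow> real^'y"
    and lam l u \<eta> :: real
    and \<beta> :: "nat \<Rightarrow> real" and p :: "nat \<Rightarrow> real^('x+'y)"
    and w :: "nat \<Rightarrow> real^('x+'y)"
    and Sxx :: "real^'x^'x" and Syy :: "real^'y^'y" and Sxy :: "real^'y^'x"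
    and Tm :: "real^'y^'x" and m d :: nat and \<Delta> :: real
    and C M A B :: "real^('x+'y)^('x+'y)"
    and uh :: "real^'x" and vh :: "real^'y" and rh :: "real^('x+'y)"
    and r :: "nat \<Rightarrow> real^('x+'y)" and \<xi> :: "nat \<Rightarrow> nat \<Rightarrow> real"
    and G :: "real^('x+'y) \<Rightarrow> real"
    and f :: "nat \<Rightarrow> real^('x+'y) \<Rightarrow> real" and fstar \<epsilon> :: "nat \<Rightarrow> real"
    and T :: int
  assumes "Sxx = emp_cov N x x" and "Syy = emp_cov N y y" and "Sxy = emp_cov N x y"
    and "Tm = minvsqrt Sxx ** Sxy ** minvsqrt Syy"
    and "m = min CARD('x) CARD('y)"
    and "d = CARD('x + 'y)"
    and "\<Delta> = \<rho> 1 - \<rho> 2"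
    and "C = blk 0 Tm (transpose Tm) 0"
    and "M = matrix_inv (lam *\<^sub>R mat 1 - C)"
    and "A = blk (lam *\<^sub>R Sxx) (- Sxy) (- transpose Sxy) (lam *\<^sub>R Syy)"
    and "B = blk Sxx 0 0 Syy"
    and "uh = minvsqrt Sxx *v a 1" and "vh = minvsqrt Syy *v b 1"
    and "rh = (1 / sqrt 2) *\<^sub>R vcat (msqrt Sxx *v uh) (msqrt Syy *v vh)"
    and "r = (\<lambda>t. msqrt B *v w t)"
    and "\<xi> = (\<lambda>t i. (r t \<bullet> p i) / norm (r t))"
    and "G = (\<lambda>v. sqrt (\<Sum>i\<in>{2..d}. ((v \<bullet> p i) / norm v)\<^sup>2 / \<beta> i)
                 / sqrt (((v \<bullet> p 1) / norm v)\<^sup>2 / \<beta> 1))"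
    and "f = (\<lambda>t v. (1/2) * (v \<bullet> (A *v v)) - v \<bullet> (B *v w t))"
    and "fstar = (\<lambda>t. f t (matrix_inv A *v (B *v w t)))"
    and "\<epsilon> = (\<lambda>t. (f t (w (Suc t)) - fstar t) / (w t \<bullet> (B *v w t)))"
    and "T = \<lceil>log (7/5) (G (r 0) / \<eta>)\<rceil>"
    and "N > 0"
    and "pd_mat Sxx" and "pd_mat Syy"
    and "\<forall>i\<in>{1..m}. \<forall>j\<in>{1..m}. a i \<bullet> a j = (if i = j then 1 else 0)"
    and "\<forall>i\<in>{1..m}. \<forall>j\<in>{1..m}. b i \<bullet> b j = (if i = j then 1 else 0)"
    and "\<forall>k\<in>{1..m}. 0 \<le> \<rho> k"
    and "\<forall>i j. 1 \<le> i \<longrightarrow> i \<le> j \<longrightarrow> j \<le> m \<longrightarrow> \<rho> j \<le> \<rho> i"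
    and "\<forall>k. m < k \<longrightarrow> \<rho> k = 0"
    and "Tm = (\<Sum>k\<in>{1..m}. \<rho> k *\<^sub>R outer (a k) (b k))"
    and "\<Delta> > 0"
    and "0 < l" and "l < u" and "u < 1"
    and "l * \<Delta> \<le> lam - \<rho> 1" and "lam - \<rho> 1 \<le> u * \<Delta>"
    and "\<forall>i\<in>{1..d}. \<forall>j\<in>{1..d}. p i \<bullet> p j = (if i = j then 1 else 0)"
    and "\<forall>i\<in>{1..d}. M *v p i = \<beta> i *\<^sub>R p i"
    and "\<forall>i j. 1 \<le> i \<longrightarrow> i \<le> j \<longrightarrow> j \<le> d \<longrightarrow> \<beta> j \<le> \<beta> i"
    and "\<beta> d > 0"
    and "p 1 = rh"
    and "0 < \<eta>" and "\<eta> < 1"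
    and "\<xi> 0 1 \<noteq> 0"
    and "\<forall>t. \<epsilon> t \<le> min (\<Sum>i\<in>{2..d}. (\<xi> t i)\<^sup>2 / \<beta> i) ((\<xi> t 1)\<^sup>2 / \<beta> 1)
                  * (\<beta> 1 - \<beta> 2)\<^sup>2 / 32"
  shows "\<forall>t::nat. T \<le> int t \<longrightarrow>
           \<bar>sin (vangle (r t) rh)\<bar> \<le> G (r t) \<and> G (r t) \<le> \<eta>"
proof -
  have "1 \<le> CARD('x)" "1 \<le> CARD('y)" by (simp_all add: Suc_le_eq)
  moreover have "d = CARD('x) + CARD('y)" using assms(6) by (simp add: card_sum)
  ultimately have m: "1 \<le> m" and d: "2 \<le> d" using assms(5) by linarith+
  have \<rho>2: "0 \<le> \<rho> 2" using assms(27,29) by (cases "2 \<le> m") simp_all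
  have \<rho>_le: "\<forall>k\<in>{2..m}. \<rho> k \<le> \<rho> 2"
  proof
    fix k assume "k \<in> {2..m}"
    thus "\<rho> k \<le> \<rho> 2" using assms(28)[rule_format, of 2 k] by simp
  qed
  have "0 < l * \<Delta>" using assms(31,32) by simp
  moreover have "u * \<Delta> < 1 * \<Delta>" using assms(31,34) by (intro mult_strict_right_mono)
  ultimately have shift: "\<rho> 2 < \<rho> 1" "\<rho> 1 < lam" "lam - \<rho> 1 < \<rho> 1 - \<rho> 2"
    using assms(7,31,35,36) by linarith+
  have on: "orthonormal_on {1..m} a" "orthonormal_on {1..m} b" "orthonormal_on {1..d} p"
    using assms(25,26,37) unfolding orthonormal_on_def by blast+
  have basis: "orthonormal_on {1..d} p" "span (p ` {1..d}) = UNIV" "2 \<le> d"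
    using on(3) orthonormal_card_span_UNIV assms(6) d by blast+
  have \<beta>: "\<forall>i\<in>{1..d}. 0 < \<beta> i" "\<forall>i\<in>{1..d}. \<beta> i \<le> \<beta> 1" "\<forall>i\<in>{2..d}. \<beta> i \<le> \<beta> 2"
    using assms(39,40) by (auto intro: order.strict_trans2)
  define K where "K = lam *\<^sub>R mat 1 - C"
  have K: "transpose K = K" "\<forall>i\<in>{1..d}. matrix_inv K *v p i = \<beta> i *\<^sub>R p i"
    using assms(8,9,38) unfolding K_def by (simp_all add: transpose_shift transpose_blk)
  note spectrum = cca_shift_invert_spectrum[OF m on(1,2) assms(27) \<rho>_le \<rho>2 assms(30) shift basis,
      folded assms(8) K_def, OF K(2) \<beta>(1,2)]
  define S where "S = msqrt B"
  have B_pd: "pd_mat B" unfolding assms(11) by (rule pd_mat_blk_diag[OF assms(23,24)])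
  have S: "transpose S = S" "invertible S" "B = S ** S"
    using msqrt_symmetric[OF B_pd] msqrt_invertible[OF B_pd] msqrt_spec(2)[OF B_pd] unfolding S_def by simp_all
  have A: "A = S ** K ** S"
    using cca_whitening[OF assms(23,24,4), of lam] msqrt_blk_diag[OF assms(23,24)]
    unfolding S_def assms(8,10,11) K_def by simp
  have r: "S *v w t = r t" for t unfolding assms(15) S_def ..
  have decay: "r t \<bullet> p 1 \<noteq> 0 \<and> coef_ratio d \<beta> (\<lambda>i. r t \<bullet> p i)
      \<le> (5/7)^t * coef_ratio d \<beta> (\<lambda>i. r 0 \<bullet> p i)" for t
  proof (rule inexact_shift_invert_iteration[OF S(1,2) K(1) spectrum(1) basis K(2) \<beta>(1,3) spectrum(2),
        of w, unfolded r])
    show "r 0 \<bullet> p 1 \<noteq> 0" using assms(44) unfolding assms(16) by simp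
  qed (use assms(45) in \<open>unfold assms(16,18,19,20) A S(3), blast\<close>)
  have G: "G (r t) = coef_ratio d \<beta> (\<lambda>i. r t \<bullet> p i)" for t
  proof -
    have "r t \<noteq> 0" using decay[of t] by auto
    hence "coef_ratio d \<beta> (\<lambda>i. (r t \<bullet> p i) / norm (r t)) = coef_ratio d \<beta> (\<lambda>i. r t \<bullet> p i)"
      by (intro coef_ratio_scale) simp
    thus ?thesis unfolding assms(17) coef_ratio_def by simp
  qed
  show ?thesis
  proof (intro allI impI conjI)
    fix t assume "T \<le> int t"
    show "\<bar>sin (vangle (r t) rh)\<bar> \<le> G (r t)"
      unfolding G assms(41)[symmetric] using basis decay[of t] \<beta>(1,2)
      by (intro sin_vangle_le_coef_ratio) auto
    show "G (r t) \<le> \<eta>"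
    proof (unfold G, rule geometric_decay_threshold[where b="7/5" and g="\<lambda>t. coef_ratio d \<beta> (\<lambda>i. r t \<bullet> p i)"])
      show "coef_ratio d \<beta> (\<lambda>i. r t \<bullet> p i) \<le> (1 / (7/5))^t * coef_ratio d \<beta> (\<lambda>i. r 0 \<bullet> p i)"
        using decay[of t] by simp
      show "\<lceil>log (7/5) (coef_ratio d \<beta> (\<lambda>i. r 0 \<bullet> p i) / \<eta>)\<rceil> \<le> int t"
        using \<open>T \<le> int t\<close> unfolding assms(21) G .
      show "0 \<le> coef_ratio d \<beta> (\<lambda>i. r 0 \<bullet> p i)" using d \<beta>(1) by (intro coef_ratio_nonneg) auto
    qed (use assms(42) in auto)
  qed
qed

end
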